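(* Assume (A1) and (A3). Let $\alpha<1$, let $\Theta=(\theta_1,\dots,\theta_J)\in\mathsf T^J$ be fixed and let $\kappa\le 0$. Then for every $\boldsymbol\lambda\in\mathcal S_J$ we have $\Psi_\alpha(\mu_{\boldsymbol\lambda,\Theta})<\infty$, and for every $\eta>0$ the sequence $(\boldsymbol\lambda_n)_{n\ge1}$ defined by an arbitrary $\boldsymbol\lambda_1\in\mathcal S_J$ and $\boldsymbol\lambda_{n+1}=\mathcal I^{\mathrm{mixt}}_\alpha(\boldsymbol\lambda_n)$ is well-defined (all normalising sums lie in $(0,\infty)$). If in addition $\boldsymbol\lambda_1\in\mathcal S_J^+$, $\eta\in(0,1]$, and the measures $K(\theta_1,\cdot),\dots,K(\theta_J,\cdot)$ are linearly independent, then: (i) $(\Psi_\alpha(\mu_{\boldsymbol\lambda_n,\Theta}))_{n\ge1}$ is nonincreasing; (ii) $(\boldsymbol\lambda_n)_{n\ge1}$ converges to some $\boldsymbol\lambda^\star\in\mathcal S_J$ which is a fixed point of $\mathcal I^{\mathrm{mixt}}_\alpha$; (iii) $\Psi_\alpha(\mu_{\boldsymbol\lambda^\star,\Theta})=\inf_{\boldsymbol\lambda'\in\mathcal S_J}\Psi_\alpha(\mu_{\boldsymbol\lambda',\Theta})$.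
   Context: Let $(\mathsf Y,\mathcal Y,\nu)$ be a measure space with $\nu$ $\sigma$-finite, and $(\mathsf T,\mathcal T)$ a measurable space. Let $k:\mathsf T\times\mathsf Y\to[0,\infty)$ be measurable with $\int_{\mathsf Y}k(\theta,y)\nu(dy)=1$ for all $\theta$, and $K(\theta,A)=\int_A k(\theta,y)\nu(dy)$. Let $p$ be a measurable positive function on $\mathsf Y$. For a probability measure $\mu$ on $\mathsf T$ write $\mu k(y)=\int_{\mathsf T}\mu(d\theta)k(\theta,y)$. For $\alpha\in\mathbb R$ let $f_0(u)=u-1-\log u$, $f_1(u)=1-u+u\log u$, and $f_\alpha(u)=\frac{1}{\alpha(\alpha-1)}[u^\alpha-1-\alpha(u-1)]$ for $\alpha\notin\{0,1\}$ ($u>0$); so $f_\alpha'(u)=\frac{u^{\alpha-1}-1}{\alpha-1}$ for $\alpha\neq1$. Define $\Psi_\alpha(\mu)=\int_{\mathsf Y}f_\alpha\big(\mu k(y)/p(y)\big)p(y)\nu(dy)$ and $b_{\mu,\alpha}(\theta)=\int_{\mathsf Y}k(\theta,y)f_\alpha'\big(\mu k(y)/p(y)\big)\nu(dy)$. Assumption (A1): $k(\theta,y)>0$ and $p(y)>0$ for all $(\theta,y)$, and $\int_{\mathsf Y}p\,d\nu<\infty$. Mixture setting: $\mathcal S_J=\{\boldsymbol\lambda\in\mathbb R^J:\lambda_j\ge0,\sum_j\lambda_j=1\}$, $\mathcal S_J^+=\{\boldsymbol\lambda\in\mathcal S_J:\lambda_j>0\ \forall j\}$, and for $\Theta=(\theta_1,\dots,\theta_J)\in\mathsf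 T^J$, $\mu_{\boldsymbol\lambda,\Theta}=\sum_{j=1}^J\lambda_j\delta_{\theta_j}$. Given $\eta>0$ and $\kappa$ with $(\alpha-1)\kappa\ge0$, let $\Gamma_\alpha(v)=[(\alpha-1)v+1]^{\eta/(1-\alpha)}$ and $\mathcal I^{\mathrm{mixt}}_\alpha(\boldsymbol\lambda)=\Big(\frac{\lambda_j\Gamma_\alpha(b_{\mu_{\boldsymbol\lambda,\Theta},\alpha}(\theta_j)+\kappa)}{\sum_{\ell=1}^J\lambda_\ell\Gamma_\alpha(b_{\mu_{\boldsymbol\lambda,\Theta},\alpha}(\theta_\ell)+\kappa)}\Big)_{1\le j\le J}$ (the Power Descent update on the mixture weights). Assumption (A3): (i) for all $y$, $\theta\mapsto k(\theta,y)$ is continuous (with $\mathsf T$ a metric space with Borel $\sigma$-field); (ii) $\int_{\mathsf Y}\max_{1\le j\le J}k(\theta_j,y)\cdot\max_{1\le j'\le J}\big(k(\theta_{j'},y)/p(y)\big)^{\alpha-1}\nu(dy)<\infty$; if $\alpha=0$, additionally $\int_{\mathsf Y}\max_{1\le j\le J}|\log(k(\theta_j,y)/p(y))|\,p(y)\nu(dy)<\infty$. *)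

theory Defs
  imports "HOL-Analysis.Analysis"
begin

definition falpha :: "real \<Rightarrow> real \<Rightarrow> real" where
  "falpha \<alpha> u =
     (if \<alpha> = 0 then u - 1 - ln u
      else if \<alpha> = 1 then 1 - u + u * ln u
      else (u powr \<alpha> - 1 - \<alpha> * (u - 1)) / (\<alpha> * (\<alpha> - 1)))"

definition falpha' :: "real \<Rightarrow> real \<Rightarrow> real" where
  "falpha' \<alpha> u = (if \<alpha> = 1 then ln u else (u powr (\<alpha> - 1) - 1) / (\<alpha> - 1))"

definition simplexJ :: "(real ^ 'j) set" where
  "simplexJ = {l. (\<forall>j. 0 \<le> l $ j) \<and> (\<Sum>j\<in>UNIV. l $ j) = 1}"

definition simplexJ_pos :: "(real ^ 'j) set" where
  "simplexJ_pos = {l. (\<forall>j. 0 < l $ j) \<and> (\<Sum>j\<in>UNIV. l $ j) = 1}"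

definition mixk :: "('a \<Rightarrow> 'y \<Rightarrow> real) \<Rightarrow> ('j::finite \<Rightarrow> 'a) \<Rightarrow> real ^ 'j \<Rightarrow> 'y \<Rightarrow> real" where
  "mixk k \<Theta> l y = (\<Sum>j\<in>UNIV. l $ j * k (\<Theta> j) y)"

text \<open>Psi_alpha(mu) = int f_alpha(mu k / p) p d nu, given the density mk = mu k.\<close>
definition Psi :: "'y measure \<Rightarrow> ('y \<Rightarrow> real) \<Rightarrow> real \<Rightarrow> ('y \<Rightarrow> real) \<Rightarrow> ennreal" where
  "Psi \<nu> p \<alpha> mk = (\<integral>\<^sup>+ y. ennreal (falpha \<alpha> (mk y / p y) * p y) \<partial>\<nu>)"

definition bfun :: "'y measure \<Rightarrow> ('a \<Rightarrow> 'y \<Rightarrow> real) \<Rightarrow> ('y \<Rightarrow> real) \<Rightarrow> real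
                    \<Rightarrow> ('y \<Rightarrow> real) \<Rightarrow> 'a \<Rightarrow> real" where
  "bfun \<nu> k p \<alpha> mk \<theta> = (\<integral> y. k \<theta> y * falpha' \<alpha> (mk y / p y) \<partial>\<nu>)"

definition Gamma_a :: "real \<Rightarrow> real \<Rightarrow> real \<Rightarrow> real" where
  "Gamma_a \<alpha> \<eta> v = ((\<alpha> - 1) * v + 1) powr (\<eta> / (1 - \<alpha>))"

definition Imixt :: "'y measure \<Rightarrow> ('a \<Rightarrow> 'y \<Rightarrow> real) \<Rightarrow> ('y \<Rightarrow> real) \<Rightarrow> real \<Rightarrow> real \<Rightarrow> real
                     \<Rightarrow> ('j::finite \<Rightarrow> 'a) \<Rightarrow> real ^ 'j \<Rightarrow> real ^ 'j" where
  "Imixt \<nu> k p \<alpha> \<eta> \<kappa> \<Theta> l =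
     (\<chi> j. l $ j * Gamma_a \<alpha> \<eta> (bfun \<nu> k p \<alpha> (mixk k \<Theta> l) (\<Theta> j) + \<kappa>) /
           (\<Sum>m\<in>UNIV. l $ m * Gamma_a \<alpha> \<eta> (bfun \<nu> k p \<alpha> (mixk k \<Theta> l) (\<Theta> m) + \<kappa>)))"

definition Kmeas :: "'y measure \<Rightarrow> ('a \<Rightarrow> 'y \<Rightarrow> real) \<Rightarrow> 'a \<Rightarrow> 'y set \<Rightarrow> real" where
  "Kmeas \<nu> k \<theta> A = measure (density \<nu> (\<lambda>y. ennreal (k \<theta> y))) A"

definition kernels_lin_indep :: "'y measure \<Rightarrow> ('a \<Rightarrow> 'y \<Rightarrow> real) \<Rightarrow> ('j::finite \<Rightarrow> 'a) \<Rightarrow> bool" where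
  "kernels_lin_indep \<nu> k \<Theta> \<longleftrightarrow>
     (\<forall>c :: 'j \<Rightarrow> real. (\<forall>A \<in> sets \<nu>. (\<Sum>j\<in>UNIV. c j * Kmeas \<nu> k (\<Theta> j) A) = 0) \<longrightarrow> (\<forall>j. c j = 0))"

end

(*
  Write A_j(\<lambda>) = \<integral> k(\<theta>_j, y) (\<mu>_\<lambda> k(y) / p(y))^(\<alpha> - 1) \<nu>(dy) and c = (\<alpha> - 1) \<kappa> \<ge> 0; one
  Power Descent step multiplies \<lambda>_j by the factor (A_j + c)^(\<eta>/(1-\<alpha>)) / Z.  The change of \<Psi>\<^sub>\<alpha>
  is its linearisation plus the integral of a Bregman term of f_\<alpha>; applying Jensen's inequality to
  that term pointwise bounds \<Psi>\<^sub>\<alpha> after one step by \<Psi>\<^sub>\<alpha> + \<Sum>_j \<lambda>_j A_j halpha(factor_j).  For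
  \<eta> \<le> 1 a finite-dimensional power-mean argument shows that this correction is \<le> 0, with
  equality only at fixed points.  Hence \<Psi>\<^sub>\<alpha> decreases, the correction tends to 0 and all limit
  points of the iterates are fixed points.  By linear independence of the K(\<theta>_j, .), a fixed point is
  determined by its support, so there are finitely many; since the increments of the iterates
  vanish, the iterates converge.  As the weights stay positive, no factor can exceed 1 at the limit:
  these are the Karush-Kuhn-Tucker conditions, and convexity of \<lambda> \<mapsto> \<Psi>\<^sub>\<alpha>(\<mu>_\<lambda>) makes the limit a
  global minimiser.
*)

theory Submission
  imports Defs
begin

section \<open>The divergence generator and Jensen's inequality\<close>

lemma powr_minus_one_div_pos_iff:
  fixes s t :: real
  assumes "0 < t" "s \<noteq> 0"
  shows "0 < (t powr s - 1) / s \<longleftrightarrow> 1 < t"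
proof -
  have "0 < (t powr s - 1) / s \<longleftrightarrow> 0 < (exp (s * ln t) - 1) / s"
    using assms by (simp add: powr_def)
  also have "\<dots> \<longleftrightarrow> 0 < (s * ln t) / s"
    by (simp only: zero_less_divide_iff) simp
  also have "(s * ln t) / s = ln t"
    using assms by simp
  finally show ?thesis
    using assms ln_gt_zero_iff by blast
qed

lemma powr_minus_one_div_neg_iff:
  fixes s t :: real
  assumes "0 < t" "s \<noteq> 0"
  shows "(t powr s - 1) / s < 0 \<longleftrightarrow> t < 1"
proof -
  have "(t powr s - 1) / s < 0 \<longleftrightarrow> (exp (s * ln t) - 1) / s < 0"
    using assms by (simp add: powr_def)
  also have "\<dots> \<longleftrightarrow> (s * ln t) / s < 0"
    by (simp only: divide_less_0_iff) simp
  also have "(s * ln t) / s = ln t"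
    using assms by simp
  finally show ?thesis
    using assms ln_less_zero_iff by blast
qed

lemma falpha_has_real_derivative:
  assumes "0 < t"
  shows "(falpha \<alpha> has_real_derivative falpha' \<alpha> t) (at t)"
proof -
  consider "\<alpha> = 0" | "\<alpha> = 1" | "\<alpha> \<noteq> 0" "\<alpha> \<noteq> 1" by blast
  then show ?thesis
  proof cases
    case 1
    have "((\<lambda>u. u - 1 - ln u) has_real_derivative 1 - 1 / t) (at t)"
      using assms by (auto intro!: derivative_eq_intros)
    moreover have "falpha' \<alpha> t = 1 - 1 / t"
      using 1 assms by (simp add: falpha'_def powr_minus_divide)
    ultimately show ?thesis
      using 1 by (simp add: falpha_def[abs_def])
  next
    case 2
    have "((\<lambda>u. 1 - u + u * ln u) has_real_derivative ln t) (at t)"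
      using assms by (auto intro!: derivative_eq_intros)
    then show ?thesis
      using 2 by (simp add: falpha_def[abs_def] falpha'_def)
  next
    case 3
    have "((\<lambda>u. (u powr \<alpha> - 1 - \<alpha> * (u - 1)) / (\<alpha> * (\<alpha> - 1))) has_real_derivative
           (\<alpha> * t powr (\<alpha> - 1) - \<alpha>) / (\<alpha> * (\<alpha> - 1))) (at t)"
      using assms 3 by (auto intro!: derivative_eq_intros)
    moreover have "(\<alpha> * t powr (\<alpha> - 1) - \<alpha>) / (\<alpha> * (\<alpha> - 1)) = falpha' \<alpha> t"
      using 3 by (simp add: falpha'_def field_simps)
    ultimately show ?thesis
      using 3 by (simp add: falpha_def[abs_def])
  qed
qed

lemma falpha'_pos_iff: "0 < t \<Longrightarrow> 0 < falpha' \<alpha> t \<longleftrightarrow> 1 < t"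
  by (cases "\<alpha> = 1") (simp_all add: falpha'_def powr_minus_one_div_pos_iff)

lemma falpha'_neg_iff: "0 < t \<Longrightarrow> falpha' \<alpha> t < 0 \<longleftrightarrow> t < 1"
  by (cases "\<alpha> = 1") (simp_all add: falpha'_def powr_minus_one_div_neg_iff)

lemma falpha_one [simp]: "falpha \<alpha> 1 = 0"
  by (simp add: falpha_def)

lemma falpha_pos:
  assumes "0 < x" "x \<noteq> 1"
  shows "0 < falpha \<alpha> x"
proof -
  have cont: "continuous_on {a..b} (falpha \<alpha>)" if "0 < a" for a b
    by (rule DERIV_continuous_on[where D = "falpha' \<alpha>"])
      (use that in \<open>auto intro!: has_field_derivative_at_within falpha_has_real_derivative\<close>)
  consider "1 < x" | "x < 1"
    using assms(2) by linarith
  then have "falpha \<alpha> 1 < falpha \<alpha> x"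
  proof cases
    case 1
    show ?thesis
    proof (rule DERIV_pos_imp_increasing_open[OF 1 _ cont])
      fix t assume "1 < t" "t < x"
      then show "\<exists>y. (falpha \<alpha> has_real_derivative y) (at t) \<and> 0 < y"
        by (intro exI[of _ "falpha' \<alpha> t"]) (simp add: falpha_has_real_derivative falpha'_pos_iff)
    qed simp
  next
    case 2
    show ?thesis
    proof (rule DERIV_neg_imp_decreasing_open[OF 2 _ cont])
      fix t assume "x < t" "t < 1"
      then show "\<exists>y. (falpha \<alpha> has_real_derivative y) (at t) \<and> y < 0"
        using assms(1)
        by (intro exI[of _ "falpha' \<alpha> t"]) (simp add: falpha_has_real_derivative falpha'_neg_iff)
    qed (use assms(1) in simp)
  qed
  then show ?thesis
    by simp
qed

lemma falpha_nonneg: "0 < x \<Longrightarrow> 0 \<le> falpha \<alpha> x"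
  using falpha_pos[of x \<alpha>] by (cases "x = 1") auto

lemma falpha_bregman:
  assumes u: "0 < u" and v: "0 < v"
  shows "falpha \<alpha> v - falpha \<alpha> u - falpha' \<alpha> u * (v - u) = u powr \<alpha> * falpha \<alpha> (v / u)"
proof -
  have ln_vu: "ln (v / u) = ln v - ln u"
    using u v by (simp add: ln_div)
  consider "\<alpha> = 0" | "\<alpha> = 1" | "\<alpha> \<noteq> 0" "\<alpha> \<noteq> 1" by blast
  then show ?thesis
  proof cases
    case 1
    have "falpha' \<alpha> u * (v - u) = v - u - v / u + 1"
      using 1 u by (simp add: falpha'_def powr_minus_divide field_simps)
    then show ?thesis
      using 1 u by (simp add: falpha_def ln_vu)
  next
    case 2
    have "u * (v / u) = v"
      using u by simp
    then show ?thesis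
      using 2 u by (simp add: falpha_def falpha'_def ln_vu algebra_simps)
  next
    case 3
    define P where "P = u powr \<alpha>"
    have P: "P \<noteq> 0" "u powr (\<alpha> - 1) = P / u" "(v / u) powr \<alpha> = v powr \<alpha> / P"
      using u v by (simp_all add: P_def powr_diff powr_divide)
    have "\<alpha> - 1 \<noteq> 0" "u \<noteq> 0"
      using 3 u by simp_all
    then show ?thesis
      using 3 unfolding falpha_def falpha'_def P_def[symmetric]
      by (simp add: P divide_simps) (simp add: algebra_simps)
  qed
qed

lemma weighted_sum_pos:
  fixes w y :: "'i \<Rightarrow> real"
  assumes S: "finite S" and w: "\<And>j. j \<in> S \<Longrightarrow> 0 \<le> w j" and ws: "(\<Sum>j\<in>S. w j) = 1"
    and y: "\<And>j. j \<in> S \<Longrightarrow> 0 < y j"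
  shows "0 < (\<Sum>j\<in>S. w j * y j)"
proof -
  obtain j0 where "j0 \<in> S" "0 < w j0"
    using ws w by (metis less_eq_real_def sum.neutral zero_neq_one)
  then show ?thesis
    using w y by (intro sum_pos2[OF S]) (auto intro: less_imp_le mult_nonneg_nonneg)
qed

lemma jensen_falpha:
  fixes w y :: "'i \<Rightarrow> real"
  assumes S: "finite S" and w: "\<And>j. j \<in> S \<Longrightarrow> 0 \<le> w j" and ws: "(\<Sum>j\<in>S. w j) = 1"
    and y: "\<And>j. j \<in> S \<Longrightarrow> 0 < y j"
  defines "a \<equiv> \<Sum>j\<in>S. w j * y j"
  shows "falpha r a \<le> (\<Sum>j\<in>S. w j * falpha r (y j))"
    and "\<exists>j\<in>S. 0 < w j \<and> y j \<noteq> a \<Longrightarrow> falpha r a < (\<Sum>j\<in>S. w j * falpha r (y j))"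
proof -
  have a: "0 < a"
    unfolding a_def by (rule weighted_sum_pos[OF S w ws y])
  define T where "T j = w j * (a powr r * falpha r (y j / a))" for j
  have T_nonneg: "0 \<le> T j" if "j \<in> S" for j
    unfolding T_def using w[OF that] y[OF that] a by (simp add: falpha_nonneg)
  \<comment> \<open>summing the tangent-line inequalities at \<open>a\<close>, the linear parts cancel\<close>
  have "(\<Sum>j\<in>S. T j) = (\<Sum>j\<in>S. w j * (falpha r (y j) - falpha r a - falpha' r a * (y j - a)))"
    unfolding T_def using y a by (intro sum.cong) (simp_all add: falpha_bregman)
  also have "\<dots> = (\<Sum>j\<in>S. w j * falpha r (y j)) - (\<Sum>j\<in>S. w j) * falpha r a
      - falpha' r a * ((\<Sum>j\<in>S. w j * y j) - (\<Sum>j\<in>S. w j) * a)"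
    by (simp add: right_diff_distrib sum_subtractf sum_distrib_left sum_distrib_right
        mult.commute mult.left_commute)
  also have "\<dots> = (\<Sum>j\<in>S. w j * falpha r (y j)) - falpha r a"
    using ws by (simp add: a_def)
  finally have sum_T: "(\<Sum>j\<in>S. T j) = (\<Sum>j\<in>S. w j * falpha r (y j)) - falpha r a" .
  show "falpha r a \<le> (\<Sum>j\<in>S. w j * falpha r (y j))"
    using sum_nonneg[of S T] T_nonneg sum_T by simp
  assume "\<exists>j\<in>S. 0 < w j \<and> y j \<noteq> a"
  then obtain j1 where j1: "j1 \<in> S" "0 < w j1" "y j1 \<noteq> a"
    by blast
  have "0 < T j1"
    unfolding T_def using j1 y[OF j1(1)] a by (simp add: falpha_pos)
  then have "0 < (\<Sum>j\<in>S. T j)"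
    using T_nonneg by (intro sum_pos2[OF S j1(1)]) auto
  then show "falpha r a < (\<Sum>j\<in>S. w j * falpha r (y j))"
    using sum_T by simp
qed

lemma jensen_powr:
  fixes w y :: "'i \<Rightarrow> real"
  assumes S: "finite S" and w: "\<And>j. j \<in> S \<Longrightarrow> 0 \<le> w j" and ws: "(\<Sum>j\<in>S. w j) = 1"
    and y: "\<And>j. j \<in> S \<Longrightarrow> 0 < y j" and r: "r \<noteq> 0" "r \<noteq> 1"
  defines "a \<equiv> \<Sum>j\<in>S. w j * y j"
  shows "a powr r / (r * (r - 1)) \<le> (\<Sum>j\<in>S. w j * y j powr r) / (r * (r - 1))"
    and "\<exists>j\<in>S. 0 < w j \<and> y j \<noteq> a \<Longrightarrow>
           a powr r / (r * (r - 1)) < (\<Sum>j\<in>S. w j * y j powr r) / (r * (r - 1))"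
proof -
  have sum_falpha: "(\<Sum>j\<in>S. w j * falpha r (y j)) = falpha r a
      + ((\<Sum>j\<in>S. w j * y j powr r) - a powr r) / (r * (r - 1))"
  proof -
    have "(\<Sum>j\<in>S. w j * falpha r (y j)) = ((\<Sum>j\<in>S. w j * y j powr r) - (\<Sum>j\<in>S. w j)
        - r * ((\<Sum>j\<in>S. w j * y j) - (\<Sum>j\<in>S. w j))) / (r * (r - 1))"
      using r
      by (simp add: falpha_def sum_divide_distrib[symmetric] right_diff_distrib sum_subtractf
          sum_distrib_left mult.commute mult.left_commute)
    then show ?thesis
      using r ws by (simp add: falpha_def a_def diff_divide_distrib)
  qed
  show "a powr r / (r * (r - 1)) \<le> (\<Sum>j\<in>S. w j * y j powr r) / (r * (r - 1))"
    using jensen_falpha(1)[where S=S and w=w and y=y and r=r, OF S w ws y]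
    by (simp add: sum_falpha a_def diff_divide_distrib)
  show "a powr r / (r * (r - 1)) < (\<Sum>j\<in>S. w j * y j powr r) / (r * (r - 1))"
    if "\<exists>j\<in>S. 0 < w j \<and> y j \<noteq> a"
    using jensen_falpha(2)[where S=S and w=w and y=y and r=r, OF S w ws y] that
    by (simp add: sum_falpha a_def diff_divide_distrib)
qed

lemma jensen_powr_concave:
  fixes w y :: "'i \<Rightarrow> real"
  assumes S: "finite S" and w: "\<And>j. j \<in> S \<Longrightarrow> 0 \<le> w j" and ws: "(\<Sum>j\<in>S. w j) = 1"
    and y: "\<And>j. j \<in> S \<Longrightarrow> 0 < y j" and r: "0 < r" "r < 1"
  shows "(\<Sum>j\<in>S. w j * y j powr r) \<le> (\<Sum>j\<in>S. w j * y j) powr r"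
    and "\<exists>j\<in>S. 0 < w j \<and> y j \<noteq> (\<Sum>j\<in>S. w j * y j) \<Longrightarrow>
           (\<Sum>j\<in>S. w j * y j powr r) < (\<Sum>j\<in>S. w j * y j) powr r"
proof -
  have "r * (r - 1) < 0"
    using r by (simp add: mult_pos_neg)
  then show "(\<Sum>j\<in>S. w j * y j powr r) \<le> (\<Sum>j\<in>S. w j * y j) powr r"
    and "\<exists>j\<in>S. 0 < w j \<and> y j \<noteq> (\<Sum>j\<in>S. w j * y j) \<Longrightarrow>
           (\<Sum>j\<in>S. w j * y j powr r) < (\<Sum>j\<in>S. w j * y j) powr r"
    using jensen_powr[where S=S and w=w and y=y and r=r, OF S w ws y] r
    by (simp_all add: divide_le_cancel divide_less_cancel)
qed

lemma jensen_powr_convex: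
  fixes w y :: "'i \<Rightarrow> real"
  assumes S: "finite S" and w: "\<And>j. j \<in> S \<Longrightarrow> 0 \<le> w j" and ws: "(\<Sum>j\<in>S. w j) = 1"
    and y: "\<And>j. j \<in> S \<Longrightarrow> 0 < y j" and r: "r < 0 \<or> 1 < r"
  shows "(\<Sum>j\<in>S. w j * y j) powr r \<le> (\<Sum>j\<in>S. w j * y j powr r)"
    and "\<exists>j\<in>S. 0 < w j \<and> y j \<noteq> (\<Sum>j\<in>S. w j * y j) \<Longrightarrow>
           (\<Sum>j\<in>S. w j * y j) powr r < (\<Sum>j\<in>S. w j * y j powr r)"
proof -
  have "0 < r * (r - 1)"
    using r by (auto simp: mult_pos_pos mult_neg_neg)
  then show "(\<Sum>j\<in>S. w j * y j) powr r \<le> (\<Sum>j\<in>S. w j * y j powr r)"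
    and "\<exists>j\<in>S. 0 < w j \<and> y j \<noteq> (\<Sum>j\<in>S. w j * y j) \<Longrightarrow>
           (\<Sum>j\<in>S. w j * y j) powr r < (\<Sum>j\<in>S. w j * y j powr r)"
    using jensen_powr[where S=S and w=w and y=y and r=r, OF S w ws y] r
    by (auto simp: divide_le_cancel divide_less_cancel)
qed

lemma jensen_ln:
  fixes w y :: "'i \<Rightarrow> real"
  assumes S: "finite S" and w: "\<And>j. j \<in> S \<Longrightarrow> 0 \<le> w j" and ws: "(\<Sum>j\<in>S. w j) = 1"
    and y: "\<And>j. j \<in> S \<Longrightarrow> 0 < y j"
  shows "(\<Sum>j\<in>S. w j * ln (y j)) \<le> ln (\<Sum>j\<in>S. w j * y j)"
proof -
  have "(\<Sum>j\<in>S. w j * falpha 0 (y j)) = (\<Sum>j\<in>S. w j * y j) - 1 - (\<Sum>j\<in>S. w j * ln (y j))"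
    using ws by (simp add: falpha_def right_diff_distrib sum_subtractf)
  then show ?thesis
    using jensen_falpha(1)[where S=S and w=w and y=y and r=0, OF S w ws y] by (simp add: falpha_def)
qed

lemma jensen_xlnx:
  fixes w y :: "'i \<Rightarrow> real"
  assumes S: "finite S" and w: "\<And>j. j \<in> S \<Longrightarrow> 0 \<le> w j" and ws: "(\<Sum>j\<in>S. w j) = 1"
    and y: "\<And>j. j \<in> S \<Longrightarrow> 0 < y j"
  defines "a \<equiv> \<Sum>j\<in>S. w j * y j"
  shows "a * ln a \<le> (\<Sum>j\<in>S. w j * (y j * ln (y j)))"
    and "\<exists>j\<in>S. 0 < w j \<and> y j \<noteq> a \<Longrightarrow> a * ln a < (\<Sum>j\<in>S. w j * (y j * ln (y j)))"
proof -
  have "(\<Sum>j\<in>S. w j * falpha 1 (y j)) = 1 - a + (\<Sum>j\<in>S. w j * (y j * ln (y j)))"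
    using ws by (simp add: falpha_def a_def algebra_simps sum.distrib sum_subtractf)
  then show "a * ln a \<le> (\<Sum>j\<in>S. w j * (y j * ln (y j)))"
    and "\<exists>j\<in>S. 0 < w j \<and> y j \<noteq> a \<Longrightarrow> a * ln a < (\<Sum>j\<in>S. w j * (y j * ln (y j)))"
    using jensen_falpha[where S=S and w=w and y=y and r=1, OF S w ws y]
    by (simp_all add: falpha_def a_def)
qed

section \<open>A finite-dimensional descent inequality\<close>

lemma sum_const_on_support:
  fixes l B :: "'i \<Rightarrow> real"
  assumes "\<And>j. j \<in> S \<Longrightarrow> 0 < l j \<Longrightarrow> B j = b" "(\<Sum>j\<in>S. l j) = 1" "\<And>j. j \<in> S \<Longrightarrow> 0 \<le> l j"
  shows "(\<Sum>j\<in>S. l j * g (B j)) = g b"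
proof -
  have "(\<Sum>j\<in>S. l j * g (B j)) = (\<Sum>j\<in>S. l j * g b)"
    using assms(1,3) by (intro sum.cong) (auto simp: le_less)
  also have "\<dots> = g b"
    using assms(2) by (simp add: sum_distrib_right[symmetric])
  finally show ?thesis .
qed

lemma nonconstant_on_support:
  fixes l B :: "'i \<Rightarrow> real"
  assumes "(\<Sum>j\<in>S. l j) = 1" "\<And>j. j \<in> S \<Longrightarrow> 0 \<le> l j"
    and "\<not> (\<forall>j\<in>S. 0 < l j \<longrightarrow> B j powr r = (\<Sum>j\<in>S. l j * B j powr r))"
  shows "\<exists>j\<in>S. 0 < l j \<and> B j \<noteq> (\<Sum>j\<in>S. l j * B j)"
proof (rule ccontr)
  assume "\<not> ?thesis"
  then have const: "\<And>j. j \<in> S \<Longrightarrow> 0 < l j \<Longrightarrow> B j = (\<Sum>j\<in>S. l j * B j)"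
    by auto
  then have "(\<Sum>j\<in>S. l j * B j powr r) = (\<Sum>j\<in>S. l j * B j) powr r"
    by (rule sum_const_on_support[OF _ assms(1,2)])
  with const assms(3) show False
    by auto
qed

lemma sum_shifted_powr_ratio:
  fixes l B :: "'i \<Rightarrow> real"
  assumes B: "\<And>j. j \<in> S \<Longrightarrow> 0 < B j"
  shows "(\<Sum>j\<in>S. l j * (B j - c) * (B j powr \<rho> / Z) powr \<alpha>)
    = Z powr (- \<alpha>) * ((\<Sum>j\<in>S. l j * B j powr (1 + \<rho> * \<alpha>)) - c * (\<Sum>j\<in>S. l j * B j powr (\<rho> * \<alpha>)))"
proof -
  have "l j * (B j - c) * (B j powr \<rho> / Z) powr \<alpha>
      = Z powr (- \<alpha>) * (l j * B j powr (1 + \<rho> * \<alpha>) - c * (l j * B j powr (\<rho> * \<alpha>)))" if "j \<in> S" for j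
  proof -
    have "(B j powr \<rho> / Z) powr \<alpha> = B j powr (\<rho> * \<alpha>) * Z powr (- \<alpha>)"
      by (simp add: powr_divide powr_powr powr_minus_divide)
    moreover have "B j * B j powr (\<rho> * \<alpha>) = B j powr (1 + \<rho> * \<alpha>)"
      using B[OF that] by (simp add: powr_add)
    ultimately show ?thesis
      by (simp add: algebra_simps)
  qed
  then show ?thesis
    by (simp add: sum_distrib_left[symmetric] sum_subtractf)
qed

lemma sum_shifted_ln_ratio:
  fixes l B :: "'i \<Rightarrow> real"
  assumes B: "\<And>j. j \<in> S \<Longrightarrow> 0 < B j" and Z: "0 < Z"
  shows "(\<Sum>j\<in>S. l j * (B j - c) * ln (B j powr \<eta> / Z))
    = \<eta> * (\<Sum>j\<in>S. l j * (B j * ln (B j))) - ln Z * (\<Sum>j\<in>S. l j * B j)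
      - c * (\<eta> * (\<Sum>j\<in>S. l j * ln (B j)) - ln Z * (\<Sum>j\<in>S. l j))"
proof -
  have "l j * (B j - c) * ln (B j powr \<eta> / Z) =
      \<eta> * (l j * (B j * ln (B j))) - ln Z * (l j * B j) - c * (\<eta> * (l j * ln (B j)) - ln Z * l j)"
    if "j \<in> S" for j
    using B[OF that] Z by (simp add: ln_div ln_powr algebra_simps)
  then show ?thesis
    by (simp add: sum_subtractf sum_distrib_left[symmetric])
qed

lemma power_mean_mono:
  fixes l B :: "'i \<Rightarrow> real" and S :: "'i set"
  assumes S: "finite S" and l: "\<And>j. j \<in> S \<Longrightarrow> 0 \<le> l j" and ls: "(\<Sum>j\<in>S. l j) = 1"
    and B: "\<And>j. j \<in> S \<Longrightarrow> 0 < B j" and st: "0 < s" "s \<le> t"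
  shows "(\<Sum>j\<in>S. l j * B j powr s) powr (1 / s) \<le> (\<Sum>j\<in>S. l j * B j powr t) powr (1 / t)"
proof -
  define y where "y j = B j powr s" for j
  have y: "\<And>j. j \<in> S \<Longrightarrow> 0 < y j"
    unfolding y_def by (metis B order_less_irrefl powr_gt_zero)
  have "(\<Sum>j\<in>S. l j * y j) powr (t / s) \<le> (\<Sum>j\<in>S. l j * y j powr (t / s))"
  proof (cases "t = s")
    case True
    have "(\<Sum>j\<in>S. l j * y j powr 1) = (\<Sum>j\<in>S. l j * y j)"
      using y by (intro sum.cong) (auto simp: less_imp_le)
    then show ?thesis
      using True st weighted_sum_pos[where w = l and y = y, OF S l ls y] by simp
  next
    case False
    then have "t / s < 0 \<or> 1 < t / s"
      using st by simp
    then show ?thesis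
      using jensen_powr_convex(1)[where w=l and y=y, OF S l ls y] by blast
  qed
  also have "\<dots> = (\<Sum>j\<in>S. l j * B j powr t)"
    unfolding y_def using st by (simp add: powr_powr)
  finally have "((\<Sum>j\<in>S. l j * y j) powr (t / s)) powr (1 / t)
      \<le> (\<Sum>j\<in>S. l j * B j powr t) powr (1 / t)"
    using st by (intro powr_mono2) auto
  then show ?thesis
    unfolding y_def using st by (simp add: powr_powr)
qed

lemma tilted_powr_sum_le_mean:
  fixes l B :: "'i \<Rightarrow> real" and S :: "'i set"
  assumes S: "finite S" and l: "\<And>j. j \<in> S \<Longrightarrow> 0 \<le> l j" and ls: "(\<Sum>j\<in>S. l j) = 1"
    and B: "\<And>j. j \<in> S \<Longrightarrow> 0 < B j" and \<alpha>: "\<alpha> < 0"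
    and \<rho>: "0 < \<rho>" "\<rho> * (1 - \<alpha>) \<le> 1"
  defines "Z \<equiv> \<Sum>j\<in>S. l j * B j powr \<rho>"
  shows "Z powr (- \<alpha>) * (\<Sum>j\<in>S. l j * B j powr (1 + \<rho> * \<alpha>)) \<le> (\<Sum>j\<in>S. l j * B j)"
    and "\<not> (\<forall>j\<in>S. 0 < l j \<longrightarrow> B j powr \<rho> = Z) \<Longrightarrow>
         Z powr (- \<alpha>) * (\<Sum>j\<in>S. l j * B j powr (1 + \<rho> * \<alpha>)) < (\<Sum>j\<in>S. l j * B j)"
proof -
  define Sm where "Sm = (\<Sum>j\<in>S. l j * B j)"
  define t where "t = 1 + \<rho> * \<alpha>"
  have Sm: "0 < Sm"
    unfolding Sm_def by (rule weighted_sum_pos[OF S l ls B])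
  have B_powr: "\<And>j. j \<in> S \<Longrightarrow> 0 < B j powr \<rho>"
    by (metis B order_less_irrefl powr_gt_zero)
  have Z: "0 < Z"
    unfolding Z_def
    by (rule weighted_sum_pos[where w = l and y = "\<lambda>j. B j powr \<rho>", OF S l ls B_powr])
  have \<rho>_le: "\<rho> \<le> 1"
    using \<rho> \<alpha> by (smt (verit) mult_le_cancel_left1)
  have t: "0 < t" "t < 1"
    unfolding t_def using \<rho> \<alpha> by (simp_all add: algebra_simps mult_neg_pos)
  have "(\<Sum>j\<in>S. l j * B j powr 1) = Sm"
    unfolding Sm_def using B by (intro sum.cong) (auto simp: less_imp_le)
  then have "Z powr (1 / \<rho>) \<le> Sm"
    using power_mean_mono[where l = l and B = B, OF S l ls B \<rho>(1) \<rho>_le] Sm unfolding Z_def by simp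
  then have "(Z powr (1 / \<rho>)) powr (- \<rho> * \<alpha>) \<le> Sm powr (- \<rho> * \<alpha>)"
    using \<rho>(1) \<alpha> by (intro powr_mono2) (auto simp: mult_pos_neg mult_nonneg_nonpos)
  then have Z_le: "Z powr (- \<alpha>) \<le> Sm powr (- \<rho> * \<alpha>)"
    using \<rho>(1) by (simp add: powr_powr)
  have Sm_eq: "Sm powr (- \<rho> * \<alpha>) * Sm powr t = Sm"
    using Sm by (simp add: powr_add[symmetric] t_def)
  have "(\<Sum>j\<in>S. l j * B j powr t) \<le> Sm powr t"
    unfolding Sm_def by (rule jensen_powr_concave(1)[OF S l ls B t])
  then have "Z powr (- \<alpha>) * (\<Sum>j\<in>S. l j * B j powr t) \<le> Sm powr (- \<rho> * \<alpha>) * Sm powr t"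
    using Z_le by (intro mult_mono) (auto intro!: sum_nonneg mult_nonneg_nonneg l)
  then show "Z powr (- \<alpha>) * (\<Sum>j\<in>S. l j * B j powr (1 + \<rho> * \<alpha>)) \<le> (\<Sum>j\<in>S. l j * B j)"
    using Sm_eq unfolding Sm_def t_def by simp
  assume "\<not> (\<forall>j\<in>S. 0 < l j \<longrightarrow> B j powr \<rho> = Z)"
  then have "\<exists>j\<in>S. 0 < l j \<and> B j \<noteq> Sm"
    unfolding Z_def Sm_def using nonconstant_on_support[OF ls l] by blast
  then have "(\<Sum>j\<in>S. l j * B j powr t) < Sm powr t"
    unfolding Sm_def using jensen_powr_concave(2)[where w=l and y=B, OF S l ls B t] by blast
  then have "Z powr (- \<alpha>) * (\<Sum>j\<in>S. l j * B j powr t) < Z powr (- \<alpha>) * Sm powr t"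
    using Z by simp
  also have "\<dots> \<le> Sm powr (- \<rho> * \<alpha>) * Sm powr t"
    using Z_le by (rule mult_right_mono) simp
  finally show "Z powr (- \<alpha>) * (\<Sum>j\<in>S. l j * B j powr (1 + \<rho> * \<alpha>)) < (\<Sum>j\<in>S. l j * B j)"
    using Sm_eq unfolding Sm_def t_def by simp
qed

lemma mean_le_tilted_powr_sum:
  fixes l B :: "'i \<Rightarrow> real" and S :: "'i set"
  assumes S: "finite S" and l: "\<And>j. j \<in> S \<Longrightarrow> 0 \<le> l j" and ls: "(\<Sum>j\<in>S. l j) = 1"
    and B: "\<And>j. j \<in> S \<Longrightarrow> 0 < B j" and \<alpha>: "0 < \<alpha>" "\<alpha> < 1"
    and \<rho>: "0 < \<rho>" "\<rho> * (1 - \<alpha>) \<le> 1"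
  defines "Z \<equiv> \<Sum>j\<in>S. l j * B j powr \<rho>"
  shows "(\<Sum>j\<in>S. l j * B j) \<le> Z powr (- \<alpha>) * (\<Sum>j\<in>S. l j * B j powr (1 + \<rho> * \<alpha>))"
    and "\<not> (\<forall>j\<in>S. 0 < l j \<longrightarrow> B j powr \<rho> = Z) \<Longrightarrow>
         (\<Sum>j\<in>S. l j * B j) < Z powr (- \<alpha>) * (\<Sum>j\<in>S. l j * B j powr (1 + \<rho> * \<alpha>))"
proof -
  define Sm where "Sm = (\<Sum>j\<in>S. l j * B j)"
  define t where "t = 1 + \<rho> * \<alpha>"
  define T where "T = (\<Sum>j\<in>S. l j * B j powr t)"
  have t: "1 < t" "\<rho> \<le> t"
    unfolding t_def using \<alpha> \<rho> by (simp_all add: algebra_simps)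
  then have t_cases: "t < 0 \<or> 1 < t"
    by simp
  have B_powr: "\<And>j. j \<in> S \<Longrightarrow> 0 < B j powr r" for r
    by (metis B order_less_irrefl powr_gt_zero)
  have Z: "0 < Z"
    unfolding Z_def
    by (rule weighted_sum_pos[where w = l and y = "\<lambda>j. B j powr \<rho>", OF S l ls B_powr])
  have T: "0 < T"
    unfolding T_def
    by (rule weighted_sum_pos[where w = l and y = "\<lambda>j. B j powr t", OF S l ls B_powr])
  have Sm: "0 < Sm"
    unfolding Sm_def by (rule weighted_sum_pos[where w = l and y = B, OF S l ls B])
  \<comment> \<open>the power mean of order \<open>t \<ge> max 1 \<rho>\<close> dominates both \<open>Z powr (1 / \<rho>)\<close> and \<open>Sm\<close>\<close>
  have "(T powr (1 / t)) powr (- \<rho> * \<alpha>) \<le> (Z powr (1 / \<rho>)) powr (- \<rho> * \<alpha>)"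
    using power_mean_mono[where l = l and B = B, OF S l ls B \<rho>(1) t(2)] Z \<alpha> \<rho>
    unfolding Z_def T_def by (intro powr_mono2') (auto simp: mult_pos_pos)
  then have "T powr (- \<rho> * \<alpha> / t) \<le> Z powr (- \<alpha>)"
    using \<rho>(1) by (simp add: powr_powr)
  moreover have "T powr (1 / t) = T powr (- \<rho> * \<alpha> / t) * T"
  proof -
    have "1 / t = - \<rho> * \<alpha> / t + 1"
      using t by (simp add: field_simps t_def)
    then have "T powr (1 / t) = T powr (- \<rho> * \<alpha> / t) * T powr 1"
      by (simp only: powr_add)
    then show ?thesis
      using T by simp
  qed
  ultimately have T_le: "T powr (1 / t) \<le> Z powr (- \<alpha>) * T"
    using T by (simp add: mult_right_mono)
  have Sm_eq: "Sm = (Sm powr t) powr (1 / t)"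
    using Sm t by (simp add: powr_powr)
  have "Sm powr t \<le> T"
    unfolding Sm_def T_def by (rule jensen_powr_convex(1)[OF S l ls B t_cases])
  then have "Sm \<le> T powr (1 / t)"
    using Sm t by (subst Sm_eq) (intro powr_mono2, auto)
  with T_le show "(\<Sum>j\<in>S. l j * B j) \<le> Z powr (- \<alpha>) * (\<Sum>j\<in>S. l j * B j powr (1 + \<rho> * \<alpha>))"
    unfolding Sm_def T_def t_def by simp
  assume "\<not> (\<forall>j\<in>S. 0 < l j \<longrightarrow> B j powr \<rho> = Z)"
  then have "\<exists>j\<in>S. 0 < l j \<and> B j \<noteq> Sm"
    unfolding Z_def Sm_def using nonconstant_on_support[OF ls l] by blast
  then have "Sm powr t < T"
    unfolding Sm_def T_def using jensen_powr_convex(2)[where w=l and y=B, OF S l ls B t_cases]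
    by blast
  then have "Sm < T powr (1 / t)"
    using Sm t by (subst Sm_eq) (intro powr_less_mono2, auto)
  with T_le show "(\<Sum>j\<in>S. l j * B j) < Z powr (- \<alpha>) * (\<Sum>j\<in>S. l j * B j powr (1 + \<rho> * \<alpha>))"
    unfolding Sm_def T_def t_def by simp
qed

lemma gap_ineq_alpha_neg:
  fixes l B :: "'i \<Rightarrow> real" and S :: "'i set"
  assumes S: "finite S" and l: "\<And>j. j \<in> S \<Longrightarrow> 0 \<le> l j" and ls: "(\<Sum>j\<in>S. l j) = 1"
    and B: "\<And>j. j \<in> S \<Longrightarrow> 0 < B j" and c: "0 \<le> c" and \<alpha>: "\<alpha> < 0"
    and \<eta>: "0 < \<eta>" "\<eta> \<le> 1"
  defines "\<rho> \<equiv> \<eta> / (1 - \<alpha>)"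
  defines "Z \<equiv> \<Sum>j\<in>S. l j * B j powr \<rho>"
  shows "(\<Sum>j\<in>S. l j * (B j - c) * (B j powr \<rho> / Z) powr \<alpha>) \<le> (\<Sum>j\<in>S. l j * (B j - c))"
    and "\<not> (\<forall>j\<in>S. 0 < l j \<longrightarrow> B j powr \<rho> = Z) \<Longrightarrow>
         (\<Sum>j\<in>S. l j * (B j - c) * (B j powr \<rho> / Z) powr \<alpha>) < (\<Sum>j\<in>S. l j * (B j - c))"
proof -
  have \<rho>: "0 < \<rho>" "\<rho> * (1 - \<alpha>) \<le> 1"
    unfolding \<rho>_def using \<eta> \<alpha> by simp_all
  have B_powr: "\<And>j. j \<in> S \<Longrightarrow> 0 < B j powr \<rho>"
    by (metis B order_less_irrefl powr_gt_zero)
  have Z: "0 < Z"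
    unfolding Z_def
    by (rule weighted_sum_pos[where w = l and y = "\<lambda>j. B j powr \<rho>", OF S l ls B_powr])
  have lhs: "(\<Sum>j\<in>S. l j * (B j - c) * (B j powr \<rho> / Z) powr \<alpha>)
      = Z powr (- \<alpha>) * (\<Sum>j\<in>S. l j * B j powr (1 + \<rho> * \<alpha>))
        - c * (Z powr (- \<alpha>) * (\<Sum>j\<in>S. l j * B j powr (\<rho> * \<alpha>)))"
    using sum_shifted_powr_ratio[where l = l and c = c and \<rho> = \<rho> and Z = Z and \<alpha> = \<alpha>, OF B]
    by (simp add: right_diff_distrib)
  have rhs: "(\<Sum>j\<in>S. l j * (B j - c)) = (\<Sum>j\<in>S. l j * B j) - c"
    using ls by (simp add: right_diff_distrib sum_subtractf sum_distrib_right[symmetric])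
  have shift_term: "1 \<le> Z powr (- \<alpha>) * (\<Sum>j\<in>S. l j * B j powr (\<rho> * \<alpha>))"
  proof -
    have \<alpha>_cases: "\<alpha> < 0 \<or> 1 < \<alpha>"
      using \<alpha> by simp
    have "Z powr \<alpha> \<le> (\<Sum>j\<in>S. l j * (B j powr \<rho>) powr \<alpha>)"
      unfolding Z_def by (rule jensen_powr_convex(1)[OF S l ls B_powr \<alpha>_cases])
    then have "Z powr (- \<alpha>) * Z powr \<alpha> \<le> Z powr (- \<alpha>) * (\<Sum>j\<in>S. l j * B j powr (\<rho> * \<alpha>))"
      by (intro mult_left_mono) (simp_all add: powr_powr)
    then show ?thesis
      using Z by (simp add: powr_minus)
  qed
  have main: "Z powr (- \<alpha>) * (\<Sum>j\<in>S. l j * B j powr (1 + \<rho> * \<alpha>)) \<le> (\<Sum>j\<in>S. l j * B j)"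
    "\<not> (\<forall>j\<in>S. 0 < l j \<longrightarrow> B j powr \<rho> = Z) \<Longrightarrow>
       Z powr (- \<alpha>) * (\<Sum>j\<in>S. l j * B j powr (1 + \<rho> * \<alpha>)) < (\<Sum>j\<in>S. l j * B j)"
    using tilted_powr_sum_le_mean[where l = l and B = B, OF S l ls B \<alpha> \<rho>] unfolding Z_def by blast+
  show "(\<Sum>j\<in>S. l j * (B j - c) * (B j powr \<rho> / Z) powr \<alpha>) \<le> (\<Sum>j\<in>S. l j * (B j - c))"
    unfolding lhs rhs using main(1) mult_left_mono[OF shift_term c] by linarith
  show "(\<Sum>j\<in>S. l j * (B j - c) * (B j powr \<rho> / Z) powr \<alpha>) < (\<Sum>j\<in>S. l j * (B j - c))"
    if "\<not> (\<forall>j\<in>S. 0 < l j \<longrightarrow> B j powr \<rho> = Z)"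
    unfolding lhs rhs using main(2)[OF that] mult_left_mono[OF shift_term c] by linarith
qed

lemma gap_ineq_alpha_pos:
  fixes l B :: "'i \<Rightarrow> real" and S :: "'i set"
  assumes S: "finite S" and l: "\<And>j. j \<in> S \<Longrightarrow> 0 \<le> l j" and ls: "(\<Sum>j\<in>S. l j) = 1"
    and B: "\<And>j. j \<in> S \<Longrightarrow> 0 < B j" and c: "0 \<le> c" and \<alpha>: "0 < \<alpha>" "\<alpha> < 1"
    and \<eta>: "0 < \<eta>" "\<eta> \<le> 1"
  defines "\<rho> \<equiv> \<eta> / (1 - \<alpha>)"
  defines "Z \<equiv> \<Sum>j\<in>S. l j * B j powr \<rho>"
  shows "(\<Sum>j\<in>S. l j * (B j - c)) \<le> (\<Sum>j\<in>S. l j * (B j - c) * (B j powr \<rho> / Z) powr \<alpha>)"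
    and "\<not> (\<forall>j\<in>S. 0 < l j \<longrightarrow> B j powr \<rho> = Z) \<Longrightarrow>
         (\<Sum>j\<in>S. l j * (B j - c)) < (\<Sum>j\<in>S. l j * (B j - c) * (B j powr \<rho> / Z) powr \<alpha>)"
proof -
  have \<rho>: "0 < \<rho>" "\<rho> * (1 - \<alpha>) \<le> 1"
    unfolding \<rho>_def using \<eta> \<alpha> by simp_all
  have B_powr: "\<And>j. j \<in> S \<Longrightarrow> 0 < B j powr \<rho>"
    by (metis B order_less_irrefl powr_gt_zero)
  have Z: "0 < Z"
    unfolding Z_def
    by (rule weighted_sum_pos[where w = l and y = "\<lambda>j. B j powr \<rho>", OF S l ls B_powr])
  have lhs: "(\<Sum>j\<in>S. l j * (B j - c) * (B j powr \<rho> / Z) powr \<alpha>)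
      = Z powr (- \<alpha>) * (\<Sum>j\<in>S. l j * B j powr (1 + \<rho> * \<alpha>))
        - c * (Z powr (- \<alpha>) * (\<Sum>j\<in>S. l j * B j powr (\<rho> * \<alpha>)))"
    using sum_shifted_powr_ratio[where l=l and c=c and \<rho>=\<rho> and Z=Z and \<alpha>=\<alpha>, OF B]
    by (simp add: right_diff_distrib)
  have rhs: "(\<Sum>j\<in>S. l j * (B j - c)) = (\<Sum>j\<in>S. l j * B j) - c"
    using ls by (simp add: right_diff_distrib sum_subtractf sum_distrib_right[symmetric])
  have shift_term: "Z powr (- \<alpha>) * (\<Sum>j\<in>S. l j * B j powr (\<rho> * \<alpha>)) \<le> 1"
  proof -
    have "(\<Sum>j\<in>S. l j * (B j powr \<rho>) powr \<alpha>) \<le> Z powr \<alpha>"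
      unfolding Z_def by (rule jensen_powr_concave(1)[OF S l ls B_powr \<alpha>])
    then have "Z powr (- \<alpha>) * (\<Sum>j\<in>S. l j * B j powr (\<rho> * \<alpha>)) \<le> Z powr (- \<alpha>) * Z powr \<alpha>"
      by (intro mult_left_mono) (simp_all add: powr_powr)
    then show ?thesis
      using Z by (simp add: powr_minus)
  qed
  have main: "(\<Sum>j\<in>S. l j * B j) \<le> Z powr (- \<alpha>) * (\<Sum>j\<in>S. l j * B j powr (1 + \<rho> * \<alpha>))"
    "\<not> (\<forall>j\<in>S. 0 < l j \<longrightarrow> B j powr \<rho> = Z) \<Longrightarrow>
       (\<Sum>j\<in>S. l j * B j) < Z powr (- \<alpha>) * (\<Sum>j\<in>S. l j * B j powr (1 + \<rho> * \<alpha>))"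
    using mean_le_tilted_powr_sum[where l=l and B=B, OF S l ls B \<alpha> \<rho>] unfolding Z_def by blast+
  show "(\<Sum>j\<in>S. l j * (B j - c)) \<le> (\<Sum>j\<in>S. l j * (B j - c) * (B j powr \<rho> / Z) powr \<alpha>)"
    unfolding lhs rhs using main(1) mult_left_mono[OF shift_term c] by linarith
  show "(\<Sum>j\<in>S. l j * (B j - c)) < (\<Sum>j\<in>S. l j * (B j - c) * (B j powr \<rho> / Z) powr \<alpha>)"
    if "\<not> (\<forall>j\<in>S. 0 < l j \<longrightarrow> B j powr \<rho> = Z)"
    unfolding lhs rhs using main(2)[OF that] mult_left_mono[OF shift_term c] by linarith
qed

lemma gap_ineq_alpha_zero:
  fixes l B :: "'i \<Rightarrow> real" and S :: "'i set"
  assumes S: "finite S" and l: "\<And>j. j \<in> S \<Longrightarrow> 0 \<le> l j" and ls: "(\<Sum>j\<in>S. l j) = 1"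
    and B: "\<And>j. j \<in> S \<Longrightarrow> 0 < B j" and c: "0 \<le> c" and \<eta>: "0 < \<eta>" "\<eta> \<le> 1"
  defines "Z \<equiv> \<Sum>j\<in>S. l j * B j powr \<eta>"
  shows "0 \<le> (\<Sum>j\<in>S. l j * (B j - c) * ln (B j powr \<eta> / Z))"
    and "\<not> (\<forall>j\<in>S. 0 < l j \<longrightarrow> B j powr \<eta> = Z) \<Longrightarrow>
         0 < (\<Sum>j\<in>S. l j * (B j - c) * ln (B j powr \<eta> / Z))"
proof -
  define Sm where "Sm = (\<Sum>j\<in>S. l j * B j)"
  have Sm: "0 < Sm"
    unfolding Sm_def by (rule weighted_sum_pos[OF S l ls B])
  have B_powr: "\<And>j. j \<in> S \<Longrightarrow> 0 < B j powr \<eta>"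
    by (metis B order_less_irrefl powr_gt_zero)
  have Z: "0 < Z"
    unfolding Z_def
    by (rule weighted_sum_pos[where w = l and y = "\<lambda>j. B j powr \<eta>", OF S l ls B_powr])
  have lhs: "(\<Sum>j\<in>S. l j * (B j - c) * ln (B j powr \<eta> / Z)) =
     \<eta> * (\<Sum>j\<in>S. l j * (B j * ln (B j))) - ln Z * Sm - c * (\<eta> * (\<Sum>j\<in>S. l j * ln (B j)) - ln Z)"
    using sum_shifted_ln_ratio[where l = l and c = c and \<eta> = \<eta> and Z = Z, OF B Z] ls
    by (simp add: Sm_def)
  have Z_le: "ln Z \<le> \<eta> * ln Sm"
  proof -
    have "(\<Sum>j\<in>S. l j * B j powr 1) = Sm"
      unfolding Sm_def using B by (intro sum.cong) (auto simp: less_imp_le)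
    then have "Z powr (1 / \<eta>) \<le> Sm"
      using power_mean_mono[where l = l and B = B, OF S l ls B \<eta>] Sm unfolding Z_def by simp
    then have "ln (Z powr (1 / \<eta>)) \<le> ln Sm"
      using Z Sm by (subst ln_le_cancel_iff) auto
    then show ?thesis
      using Z \<eta> by (simp add: ln_powr field_simps)
  qed
  have ln_Z_ge: "\<eta> * (\<Sum>j\<in>S. l j * ln (B j)) \<le> ln Z"
  proof -
    have "(\<Sum>j\<in>S. l j * ln (B j powr \<eta>)) \<le> ln Z"
      unfolding Z_def by (rule jensen_ln[OF S l ls B_powr])
    moreover have "(\<Sum>j\<in>S. l j * ln (B j powr \<eta>)) = \<eta> * (\<Sum>j\<in>S. l j * ln (B j))"
      unfolding sum_distrib_left using B
      by (intro sum.cong refl) (simp add: less_imp_neq[symmetric])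
    ultimately show ?thesis
      by simp
  qed
  have key: "\<eta> * (Sm * ln Sm) - ln Z * Sm \<ge> 0"
    using mult_right_mono[OF Z_le, of Sm] Sm by (simp add: algebra_simps)
  have shift_term: "0 \<le> c * (ln Z - \<eta> * (\<Sum>j\<in>S. l j * ln (B j)))"
    using c ln_Z_ge by simp
  have "Sm * ln Sm \<le> (\<Sum>j\<in>S. l j * (B j * ln (B j)))"
    unfolding Sm_def by (rule jensen_xlnx(1)[OF S l ls B])
  then have "\<eta> * (Sm * ln Sm) \<le> \<eta> * (\<Sum>j\<in>S. l j * (B j * ln (B j)))"
    using \<eta> by simp
  then show "0 \<le> (\<Sum>j\<in>S. l j * (B j - c) * ln (B j powr \<eta> / Z))"
    unfolding lhs using key shift_term by (simp add: algebra_simps)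
  assume "\<not> (\<forall>j\<in>S. 0 < l j \<longrightarrow> B j powr \<eta> = Z)"
  then have "\<exists>j\<in>S. 0 < l j \<and> B j \<noteq> Sm"
    unfolding Z_def Sm_def using nonconstant_on_support[OF ls l] by blast
  then have "Sm * ln Sm < (\<Sum>j\<in>S. l j * (B j * ln (B j)))"
    unfolding Sm_def using jensen_xlnx(2)[where w=l and y=B, OF S l ls B] by blast
  then have "\<eta> * (Sm * ln Sm) < \<eta> * (\<Sum>j\<in>S. l j * (B j * ln (B j)))"
    using \<eta> by simp
  then show "0 < (\<Sum>j\<in>S. l j * (B j - c) * ln (B j powr \<eta> / Z))"
    unfolding lhs using key shift_term by (simp add: algebra_simps)
qed

definition halpha :: "real \<Rightarrow> real \<Rightarrow> real" where
  "halpha \<alpha> w = (if \<alpha> = 0 then - ln w else (w powr \<alpha> - 1) / (\<alpha> * (\<alpha> - 1)))"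

lemma falpha_plus_linear_eq_halpha:
  assumes "\<alpha> \<noteq> 1" "0 < w"
  shows "falpha \<alpha> w + (w - 1) / (\<alpha> - 1) = halpha \<alpha> w"
proof (cases "\<alpha> = 0")
  case False
  have "(w - 1) / (\<alpha> - 1) = \<alpha> * (w - 1) / (\<alpha> * (\<alpha> - 1))"
    using False by simp
  then have "falpha \<alpha> w + (w - 1) / (\<alpha> - 1)
      = (w powr \<alpha> - 1 - \<alpha> * (w - 1)) / (\<alpha> * (\<alpha> - 1)) + \<alpha> * (w - 1) / (\<alpha> * (\<alpha> - 1))"
    using assms False by (simp add: falpha_def)
  also have "\<dots> = halpha \<alpha> w"
    using False by (subst add_divide_distrib[symmetric]) (simp add: halpha_def)
  finally show ?thesis .
qed (simp add: falpha_def halpha_def)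

lemma sum_mult_halpha:
  assumes "\<alpha> \<noteq> 0"
  shows "(\<Sum>j\<in>S. a j * halpha \<alpha> (w j)) = ((\<Sum>j\<in>S. a j * w j powr \<alpha>) - (\<Sum>j\<in>S. a j)) / (\<alpha> * (\<alpha> - 1))"
  using assms
  by (simp add: halpha_def sum_divide_distrib[symmetric] right_diff_distrib sum_subtractf)

lemma halpha_tendsto:
  assumes "(f \<longlongrightarrow> a) F" "0 < a"
  shows "((\<lambda>x. halpha b (f x)) \<longlongrightarrow> halpha b a) F"
  unfolding halpha_def using assms by (cases "b = 0"; cases "b = 1") (auto intro!: tendsto_intros)

lemma sum_halpha_gap_nonpos:
  fixes l A :: "'i \<Rightarrow> real" and S :: "'i set"
  assumes S: "finite S" and l: "\<And>j. j \<in> S \<Longrightarrow> 0 \<le> l j" and ls: "(\<Sum>j\<in>S. l j) = 1"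
    and A: "\<And>j. j \<in> S \<Longrightarrow> 0 < A j" and c: "0 \<le> c" and \<alpha>: "\<alpha> < 1"
    and \<eta>: "0 < \<eta>" "\<eta> \<le> 1"
  defines "\<rho> \<equiv> \<eta> / (1 - \<alpha>)"
  defines "Z \<equiv> \<Sum>j\<in>S. l j * (A j + c) powr \<rho>"
  defines "G \<equiv> \<Sum>j\<in>S. l j * A j * halpha \<alpha> ((A j + c) powr \<rho> / Z)"
  shows "G \<le> 0" and "\<not> (\<forall>j\<in>S. 0 < l j \<longrightarrow> (A j + c) powr \<rho> = Z) \<Longrightarrow> G < 0"
proof -
  define B where "B j = A j + c" for j
  have B: "\<And>j. j \<in> S \<Longrightarrow> 0 < B j"
    unfolding B_def using A c by (simp add: add_pos_nonneg)
  have A_B: "A = (\<lambda>j. B j - c)"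
    by (simp add: B_def)
  define nonconst where "nonconst \<longleftrightarrow> \<not> (\<forall>j\<in>S. 0 < l j \<longrightarrow> B j powr \<rho> = Z)"
  note defs = G_def nonconst_def Z_def \<rho>_def B_def[symmetric]
  consider "\<alpha> = 0" | "\<alpha> < 0" | "0 < \<alpha>"
    by linarith
  then have "G \<le> 0 \<and> (nonconst \<longrightarrow> G < 0)"
  proof cases
    case 1
    then show ?thesis
      using gap_ineq_alpha_zero[where l = l and B = B, OF S l ls B c \<eta>]
      unfolding defs by (simp add: halpha_def sum_negf B_def)
  next
    case 2
    have "0 < \<alpha> * (\<alpha> - 1)"
      using 2 by (simp add: mult_neg_neg)
    then show ?thesis
      using gap_ineq_alpha_neg[where l = l and B = B, OF S l ls B c 2 \<eta>]
      unfolding G_def sum_mult_halpha[OF less_imp_neq[OF 2]] A_B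
      by (auto simp: defs divide_nonpos_pos divide_neg_pos)
  next
    case 3
    have "\<alpha> * (\<alpha> - 1) < 0"
      using 3 \<alpha> by (simp add: mult_pos_neg)
    then show ?thesis
      using gap_ineq_alpha_pos[where l = l and B = B, OF S l ls B c 3 \<alpha> \<eta>]
      unfolding G_def sum_mult_halpha[OF less_imp_neq[OF 3, symmetric]] A_B
      by (auto simp: defs divide_nonneg_neg divide_pos_neg)
  qed
  then show "G \<le> 0" and "\<not> (\<forall>j\<in>S. 0 < l j \<longrightarrow> (A j + c) powr \<rho> = Z) \<Longrightarrow> G < 0"
    unfolding nonconst_def B_def by auto
qed

section \<open>The simplex and sequences with finitely many limit points\<close>

lemma closed_simplexJ: "closed (simplexJ :: (real ^ 'j::finite) set)"
  unfolding simplexJ_def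
  by (intro closed_Collect_conj closed_Collect_all closed_Collect_le closed_Collect_eq
      continuous_intros)

lemma bounded_simplexJ: "bounded (simplexJ :: (real ^ 'j::finite) set)"
proof -
  have "norm l \<le> 1" if "l \<in> simplexJ" for l :: "real ^ 'j"
  proof -
    have "norm l \<le> (\<Sum>i\<in>UNIV. \<bar>l $ i\<bar>)"
      by (rule norm_le_l1_cart)
    also have "\<dots> = 1"
      using that by (simp add: simplexJ_def)
    finally show ?thesis .
  qed
  then show ?thesis
    by (auto simp: bounded_iff)
qed

lemma bounded_not_eventually_convergent_subseq:
  fixes x :: "nat \<Rightarrow> 'a::heine_borel"
  assumes "bounded (range x)" "\<not> eventually P sequentially"
  obtains l r where "strict_mono r" "\<And>n. \<not> P (r n)" "(x \<circ> r) \<longlonglongrightarrow> l"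
proof -
  obtain s :: "nat \<Rightarrow> nat" where s: "strict_mono s" "\<forall>n. \<not> P (s n)"
    using not_eventually_sequentiallyD[OF assms(2)] by blast
  have "bounded (range (x \<circ> s))"
    using assms(1) by (rule bounded_subset) auto
  then obtain l t where "strict_mono t" "((x \<circ> s) \<circ> t) \<longlonglongrightarrow> l"
    using bounded_imp_convergent_subsequence by blast
  then show ?thesis
    using s by (intro that[of "s \<circ> t" l]) (auto simp: strict_mono_o o_assoc)
qed

lemma finite_set_separated:
  fixes F :: "'a::metric_space set"
  assumes "finite F"
  obtains \<delta> where "0 < \<delta>" "\<And>a b. a \<in> F \<Longrightarrow> b \<in> F \<Longrightarrow> a \<noteq> b \<Longrightarrow> \<delta> \<le> dist a b"
proof -
  define D where "D = insert 1 ((\<lambda>(a, b). dist a b) ` {(a, b). a \<in> F \<and> b \<in> F \<and> a \<noteq> b})"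
  have "finite {(a, b). a \<in> F \<and> b \<in> F \<and> a \<noteq> b}"
    by (rule finite_subset[of _ "F \<times> F"]) (use assms in auto)
  then have "finite D"
    by (simp add: D_def)
  moreover have "\<forall>d\<in>D. 0 < d"
    by (auto simp: D_def)
  ultimately have "0 < Min D"
    by (simp add: D_def)
  moreover have "Min D \<le> dist a b" if "a \<in> F" "b \<in> F" "a \<noteq> b" for a b
    using \<open>finite D\<close> that by (intro Min_le) (auto simp: D_def)
  ultimately show ?thesis
    using that by blast
qed

lemma eventually_near_limit_points:
  fixes x :: "nat \<Rightarrow> 'a::heine_borel"
  assumes bounded: "bounded (range x)"
    and limit_points: "\<And>l r. strict_mono r \<Longrightarrow> (x \<circ> r) \<longlonglongrightarrow> l \<Longrightarrow> l \<in> F"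
    and \<delta>: "0 < \<delta>"
  shows "eventually (\<lambda>n. \<exists>a\<in>F. dist a (x n) < \<delta>) sequentially"
proof (rule ccontr)
  assume "\<not> ?thesis"
  then obtain l r where r: "strict_mono r" "\<And>n. \<not> (\<exists>a\<in>F. dist a (x (r n)) < \<delta>)" "(x \<circ> r) \<longlonglongrightarrow> l"
    by (rule bounded_not_eventually_convergent_subseq[OF bounded]) blast
  have "l \<in> F"
    by (rule limit_points[OF r(1,3)])
  moreover obtain n where "dist ((x \<circ> r) n) l < \<delta>"
    using r(3) \<delta> by (metis (full_types) LIMSEQ_iff_nz dist_norm order_refl)
  ultimately show False
    using r(2)[of n] by (auto simp: dist_commute)
qed

lemma trapped_near_point:
  fixes x :: "nat \<Rightarrow> 'a::metric_space"
  assumes sep: "\<And>a b. a \<in> F \<Longrightarrow> b \<in> F \<Longrightarrow> a \<noteq> b \<Longrightarrow> 3 * \<delta> \<le> dist a b"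
    and near: "\<And>n. N \<le> n \<Longrightarrow> (\<exists>b\<in>F. dist b (x n) < \<delta>) \<and> dist (x (Suc n)) (x n) < \<delta>"
    and a: "a \<in> F" "dist a (x N) < \<delta>"
  shows "N \<le> n \<Longrightarrow> dist a (x n) < \<delta>"
proof (induction n rule: dec_induct)
  case (step n)
  obtain b where b: "b \<in> F" "dist b (x (Suc n)) < \<delta>"
    using near[of "Suc n"] step(1) by auto
  have "dist a b \<le> dist a (x n) + dist (x n) (x (Suc n)) + dist (x (Suc n)) b"
    using dist_triangle[of a b "x n"] dist_triangle[of "x n" b "x (Suc n)"] by linarith
  also have "\<dots> < 3 * \<delta>"
    using step(3) near[OF step(1)] b(2) by (simp add: dist_commute)
  finally have "a = b"
    using sep[OF a(1) b(1)] by fastforce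
  then show ?case
    using b(2) by simp
qed (rule a(2))

text \<open>Once the increments are small, the sequence cannot move between limit points that lie a
  fixed distance apart.\<close>
lemma convergent_if_finite_limit_points:
  fixes x :: "nat \<Rightarrow> 'a::heine_borel"
  assumes bounded: "bounded (range x)" and F: "finite F"
    and limit_points: "\<And>l r. strict_mono r \<Longrightarrow> (x \<circ> r) \<longlonglongrightarrow> l \<Longrightarrow> l \<in> F"
    and increments: "(\<lambda>n. dist (x (Suc n)) (x n)) \<longlonglongrightarrow> 0"
  shows "convergent x"
proof -
  obtain \<delta>3 where "0 < \<delta>3" and sep: "\<And>a b. a \<in> F \<Longrightarrow> b \<in> F \<Longrightarrow> a \<noteq> b \<Longrightarrow> \<delta>3 \<le> dist a b"
    using finite_set_separated[OF F] by blast
  define \<delta> where "\<delta> = \<delta>3 / 3"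
  have \<delta>: "0 < \<delta>"
    using \<open>0 < \<delta>3\<close> by (simp add: \<delta>_def)
  have "eventually (\<lambda>n. \<exists>a\<in>F. dist a (x n) < \<delta>) sequentially"
    using bounded limit_points \<delta> by (rule eventually_near_limit_points)
  then have "eventually (\<lambda>n. (\<exists>a\<in>F. dist a (x n) < \<delta>) \<and> dist (x (Suc n)) (x n) < \<delta>) sequentially"
    using order_tendstoD(2)[OF increments \<delta>] by eventually_elim auto
  then obtain N where N: "\<And>n. N \<le> n \<Longrightarrow> (\<exists>a\<in>F. dist a (x n) < \<delta>) \<and> dist (x (Suc n)) (x n) < \<delta>"
    unfolding eventually_sequentially by blast
  then obtain a where a: "a \<in> F" "dist a (x N) < \<delta>"
    by blast
  have sep3: "\<And>a b. a \<in> F \<Longrightarrow> b \<in> F \<Longrightarrow> a \<noteq> b \<Longrightarrow> 3 * \<delta> \<le> dist a b"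
    using sep by (simp add: \<delta>_def)
  note stay = trapped_near_point[where x = x and F = F, OF sep3 N a]
  have "x \<longlonglongrightarrow> a"
  proof (rule ccontr)
    assume "\<not> x \<longlonglongrightarrow> a"
    then obtain \<epsilon> where \<epsilon>: "0 < \<epsilon>" "\<not> eventually (\<lambda>n. dist (x n) a < \<epsilon>) sequentially"
      by (auto simp: tendsto_iff)
    obtain l r where r: "strict_mono r" "\<And>n. \<not> dist (x (r n)) a < \<epsilon>" "(x \<circ> r) \<longlonglongrightarrow> l"
      using \<epsilon>(2) by (rule bounded_not_eventually_convergent_subseq[OF bounded]) blast
    have dist_lim: "(\<lambda>n. dist ((x \<circ> r) n) a) \<longlonglongrightarrow> dist l a"
      by (intro tendsto_dist r(3) tendsto_const)
    have "\<epsilon> \<le> dist l a"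
      by (rule LIMSEQ_le_const[OF dist_lim]) (use r(2) in \<open>auto simp: not_less\<close>)
    moreover have "dist l a \<le> \<delta>"
    proof (rule LIMSEQ_le_const2[OF dist_lim], intro exI allI impI)
      fix n assume "N \<le> n"
      then have "N \<le> r n"
        using r(1) seq_suble le_trans by blast
      then show "dist ((x \<circ> r) n) a \<le> \<delta>"
        using stay[of "r n"] by (simp add: dist_commute)
    qed
    moreover have "\<delta>3 \<le> dist l a" if "l \<noteq> a"
      using sep[OF limit_points[OF r(1,3)] a(1) that] .
    ultimately show False
      using \<epsilon>(1) \<delta> by (cases "l = a") (auto simp: \<delta>_def)
  qed
  then show ?thesis
    by (rule convergentI)
qed

lemma simplexJ_nonneg: "l \<in> simplexJ \<Longrightarrow> 0 \<le> l $ j"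
  by (simp add: simplexJ_def)

lemma simplexJ_sum: "l \<in> simplexJ \<Longrightarrow> (\<Sum>j\<in>UNIV. l $ j) = 1"
  by (simp add: simplexJ_def)

lemma simplexJ_large_coordinate:
  fixes l :: "real ^ 'j::finite"
  assumes "l \<in> simplexJ"
  obtains j where "1 / CARD('j) \<le> l $ j"
proof -
  have "\<exists>j. 1 / CARD('j) \<le> l $ j"
  proof (rule ccontr)
    assume "\<not> ?thesis"
    then have "\<And>j. l $ j < 1 / CARD('j)"
      by (simp add: not_le)
    then have "(\<Sum>j\<in>UNIV. l $ j) < (\<Sum>j\<in>(UNIV :: 'j set). 1 / CARD('j))"
      using sum_strict_mono[of UNIV "\<lambda>j. l $ j" "\<lambda>j. 1 / CARD('j)"] by simp
    then show False
      using simplexJ_sum[OF assms] by simp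
  qed
  then show ?thesis
    using that by blast
qed

section \<open>Power Descent on mixture weights\<close>

locale power_descent =
  fixes \<nu> :: "'y measure" and k :: "'a::topological_space \<Rightarrow> 'y \<Rightarrow> real" and p :: "'y \<Rightarrow> real"
    and \<Theta> :: "'j::finite \<Rightarrow> 'a" and \<alpha> \<kappa> :: real
  assumes k_measurable: "(\<lambda>(\<theta>, y). k \<theta> y) \<in> borel_measurable (borel \<Otimes>\<^sub>M \<nu>)"
    and k_pos: "\<And>\<theta> y. y \<in> space \<nu> \<Longrightarrow> 0 < k \<theta> y"
    and k_nn_integral: "\<And>\<theta>. (\<integral>\<^sup>+ y. ennreal (k \<theta> y) \<partial>\<nu>) = 1"
    and p_measurable [measurable]: "p \<in> borel_measurable \<nu>"
    and p_pos: "\<And>y. y \<in> space \<nu> \<Longrightarrow> 0 < p y"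
    and p_nn_integral: "(\<integral>\<^sup>+ y. ennreal (p y) \<partial>\<nu>) < \<infinity>"
    and envelope_nn_integral: "(\<integral>\<^sup>+ y. ennreal ((MAX j. k (\<Theta> j) y) *
                    (MAX j'. (k (\<Theta> j') y / p y) powr (\<alpha> - 1))) \<partial>\<nu>) < \<infinity>"
    and log_envelope_nn_integral: "\<alpha> = 0 \<Longrightarrow>
                 (\<integral>\<^sup>+ y. ennreal ((MAX j. \<bar>ln (k (\<Theta> j) y / p y)\<bar>) * p y) \<partial>\<nu>) < \<infinity>"
    and alpha_less_one: "\<alpha> < 1"
    and kappa_nonpos: "\<kappa> \<le> 0"
begin

definition kern :: "'j \<Rightarrow> 'y \<Rightarrow> real" where
  "kern j y = k (\<Theta> j) y"

definition mix :: "real ^ 'j \<Rightarrow> 'y \<Rightarrow> real" where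
  "mix l y = (\<Sum>j\<in>UNIV. l $ j * kern j y)"

definition ratio :: "real ^ 'j \<Rightarrow> 'y \<Rightarrow> real" where
  "ratio l y = mix l y / p y"

text \<open>In the notation of the paper, \<open>b\<^sub>\<mu>\<^sub>,\<^sub>\<alpha>(\<theta>\<^sub>j) = (A_coef l j - 1) / (\<alpha> - 1)\<close> for \<open>\<mu> = \<mu>\<^sub>l\<^sub>,\<^sub>\<Theta>\<close>.\<close>
definition A_coef :: "real ^ 'j \<Rightarrow> 'j \<Rightarrow> real" where
  "A_coef l j = (\<integral>y. kern j y * ratio l y powr (\<alpha> - 1) \<partial>\<nu>)"

definition shift :: real where
  "shift = (\<alpha> - 1) * \<kappa>"

definition envelope :: "'y \<Rightarrow> real" where
  "envelope y = (MAX j. kern j y) * (MAX j'. (kern j' y / p y) powr (\<alpha> - 1))"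

definition log_envelope :: "'y \<Rightarrow> real" where
  "log_envelope y = (MAX j. \<bar>ln (kern j y / p y)\<bar>)"

lemma mixk_eq_mix: "mixk k \<Theta> l = mix l"
  by (simp add: mixk_def mix_def kern_def fun_eq_iff)

lemma kern_measurable [measurable]: "kern j \<in> borel_measurable \<nu>"
proof -
  have "(\<lambda>y. (\<lambda>(\<theta>, y). k \<theta> y) (\<Theta> j, y)) \<in> borel_measurable \<nu>"
    by (rule measurable_Pair2[OF k_measurable]) simp
  then show ?thesis
    by (simp add: kern_def[abs_def])
qed

lemma mix_measurable [measurable]: "mix l \<in> borel_measurable \<nu>"
  unfolding mix_def[abs_def] by measurable

lemma ratio_measurable [measurable]: "ratio l \<in> borel_measurable \<nu>"
  unfolding ratio_def[abs_def] by measurable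

lemma envelope_measurable [measurable]: "envelope \<in> borel_measurable \<nu>"
  unfolding envelope_def[abs_def] by measurable

lemma log_envelope_measurable [measurable]: "log_envelope \<in> borel_measurable \<nu>"
  unfolding log_envelope_def[abs_def] by measurable

lemma kern_pos: "y \<in> space \<nu> \<Longrightarrow> 0 < kern j y"
  by (simp add: kern_def k_pos)

lemma shift_nonneg: "0 \<le> shift"
  unfolding shift_def using alpha_less_one kappa_nonpos by (simp add: mult_nonpos_nonpos)

lemma mix_ge: "l \<in> simplexJ \<Longrightarrow> y \<in> space \<nu> \<Longrightarrow> l $ j * kern j y \<le> mix l y"
  unfolding mix_def
  by (intro member_le_sum)
    (auto intro!: mult_nonneg_nonneg simplexJ_nonneg less_imp_le[OF kern_pos])

lemma mix_le_Max:
  assumes "l \<in> simplexJ"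
  shows "mix l y \<le> (MAX j. kern j y)"
proof -
  have "mix l y \<le> (\<Sum>j\<in>UNIV. l $ j * (MAX j. kern j y))"
    unfolding mix_def using simplexJ_nonneg[OF assms] by (intro sum_mono mult_left_mono) auto
  also have "\<dots> = (MAX j. kern j y)"
    using simplexJ_sum[OF assms] by (simp add: sum_distrib_right[symmetric])
  finally show ?thesis .
qed

lemma ratio_lower_bound:
  assumes "l \<in> simplexJ" "y \<in> space \<nu>"
  obtains j where "(kern j y / p y) / CARD('j) \<le> ratio l y"
proof -
  obtain j where j: "1 / CARD('j) \<le> l $ j"
    using simplexJ_large_coordinate[OF assms(1)] .
  have "kern j y / CARD('j) \<le> l $ j * kern j y"
    using mult_right_mono[OF j less_imp_le[OF kern_pos[OF assms(2)]]] by simp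
  also have "\<dots> \<le> mix l y"
    by (rule mix_ge[OF assms])
  finally have "kern j y / CARD('j) / p y \<le> ratio l y"
    unfolding ratio_def by (rule divide_right_mono[OF _ less_imp_le[OF p_pos[OF assms(2)]]])
  then have "(kern j y / p y) / CARD('j) \<le> ratio l y"
    by (simp add: mult.commute)
  then show ?thesis
    by (rule that)
qed

lemma ratio_pos: "l \<in> simplexJ \<Longrightarrow> y \<in> space \<nu> \<Longrightarrow> 0 < ratio l y"
  by (rule ratio_lower_bound) (use kern_pos p_pos in \<open>auto intro: less_le_trans[rotated]\<close>)

lemma mix_eq_ratio_mult: "y \<in> space \<nu> \<Longrightarrow> mix l y = ratio l y * p y"
  using p_pos[of y] by (simp add: ratio_def)

lemma mix_pos: "l \<in> simplexJ \<Longrightarrow> y \<in> space \<nu> \<Longrightarrow> 0 < mix l y"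
  using ratio_pos p_pos by (simp add: mix_eq_ratio_mult)

lemma ratio_powr_le_envelope_factor:
  assumes "l \<in> simplexJ" "y \<in> space \<nu>"
  shows "ratio l y powr (\<alpha> - 1) \<le> CARD('j) powr (1 - \<alpha>) * (MAX j'. (kern j' y / p y) powr (\<alpha> - 1))"
proof -
  obtain j where j: "(kern j y / p y) / CARD('j) \<le> ratio l y"
    using ratio_lower_bound[OF assms] .
  have pos: "0 < (kern j y / p y) / CARD('j)"
    using kern_pos[OF assms(2)] p_pos[OF assms(2)] by simp
  have "ratio l y powr (\<alpha> - 1) \<le> ((kern j y / p y) / CARD('j)) powr (\<alpha> - 1)"
    using j pos alpha_less_one by (intro powr_mono2') auto
  also have "\<dots> = (kern j y / p y) powr (\<alpha> - 1) / CARD('j) powr (\<alpha> - 1)"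
    by (rule powr_divide)
  also have "\<dots> = CARD('j) powr (1 - \<alpha>) * (kern j y / p y) powr (\<alpha> - 1)"
    using powr_minus_divide[of "real CARD('j)" "\<alpha> - 1"] by simp
  also have "\<dots> \<le> CARD('j) powr (1 - \<alpha>) * (MAX j'. (kern j' y / p y) powr (\<alpha> - 1))"
    by (intro mult_left_mono) (auto intro: Max_ge)
  finally show ?thesis .
qed

lemma kern_integrable: "integrable \<nu> (kern j)"
  by (rule integrableI_nonneg) (auto simp: kern_def k_nn_integral intro!: less_imp_le k_pos)

lemma kern_integral: "(\<integral>y. kern j y \<partial>\<nu>) = 1"
proof -
  have "ennreal (\<integral>y. kern j y \<partial>\<nu>) = (\<integral>\<^sup>+ y. ennreal (kern j y) \<partial>\<nu>)"
    by (rule nn_integral_eq_integral[symmetric]) (auto intro: less_imp_le kern_pos kern_integrable)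
  also have "\<dots> = 1"
    by (simp add: kern_def k_nn_integral)
  finally show ?thesis
    by (metis ennreal_1 ennreal_inj integral_nonneg_AE kern_pos less_imp_le AE_I2 zero_le_one)
qed

lemma p_integrable: "integrable \<nu> p"
proof (rule integrableI_nonneg)
  show "AE y in \<nu>. 0 \<le> p y"
    by (auto intro: less_imp_le p_pos)
  show "(\<integral>\<^sup>+ y. ennreal (p y) \<partial>\<nu>) < \<infinity>"
    by (rule p_nn_integral)
qed simp

lemma envelope_nonneg: "y \<in> space \<nu> \<Longrightarrow> 0 \<le> envelope y"
  unfolding envelope_def
  by (intro mult_nonneg_nonneg) (auto simp: Max_ge_iff less_imp_le[OF kern_pos])

lemma envelope_integrable: "integrable \<nu> envelope"
proof (rule integrableI_nonneg)
  show "AE y in \<nu>. 0 \<le> envelope y"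
    by (auto intro!: envelope_nonneg)
  show "(\<integral>\<^sup>+ y. ennreal (envelope y) \<partial>\<nu>) < \<infinity>"
    using envelope_nn_integral by (simp add: envelope_def kern_def)
qed simp

lemma kern_ratio_powr_bound:
  assumes "l \<in> simplexJ" "y \<in> space \<nu>"
  shows "\<bar>kern i y * ratio l y powr (\<alpha> - 1)\<bar> \<le> CARD('j) powr (1 - \<alpha>) * envelope y"
proof -
  have "\<bar>kern i y * ratio l y powr (\<alpha> - 1)\<bar> = kern i y * ratio l y powr (\<alpha> - 1)"
    using kern_pos[OF assms(2), of i] by (simp add: abs_mult)
  also have "\<dots> \<le> (MAX j. kern j y)
      * (CARD('j) powr (1 - \<alpha>) * (MAX j'. (kern j' y / p y) powr (\<alpha> - 1)))"
    by (intro mult_mono ratio_powr_le_envelope_factor[OF assms])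
      (auto simp: Max_ge_iff less_imp_le[OF kern_pos[OF assms(2)]])
  also have "\<dots> = CARD('j) powr (1 - \<alpha>) * envelope y"
    by (simp add: envelope_def)
  finally show ?thesis .
qed

lemma kern_ratio_powr_integrable:
  assumes "l \<in> simplexJ"
  shows "integrable \<nu> (\<lambda>y. kern i y * ratio l y powr (\<alpha> - 1))"
proof (rule Bochner_Integration.integrable_bound)
  show "integrable \<nu> (\<lambda>y. CARD('j) powr (1 - \<alpha>) * envelope y)"
    by (intro integrable_mult_right envelope_integrable)
  show "AE y in \<nu>. norm (kern i y * ratio l y powr (\<alpha> - 1))
      \<le> norm (CARD('j) powr (1 - \<alpha>) * envelope y)"
    using kern_ratio_powr_bound[OF assms] envelope_nonneg by auto
qed simp

lemma A_coef_pos: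
  assumes "l \<in> simplexJ"
  shows "0 < A_coef l j"
proof -
  have nonneg: "AE y in \<nu>. 0 \<le> kern j y * ratio l y powr (\<alpha> - 1)"
    by (auto intro!: mult_nonneg_nonneg less_imp_le[OF kern_pos])
  have "A_coef l j \<noteq> 0"
  proof
    assume "A_coef l j = 0"
    then have "AE y in \<nu>. kern j y * ratio l y powr (\<alpha> - 1) = 0"
      using integral_nonneg_eq_0_iff_AE[OF kern_ratio_powr_integrable[OF assms] nonneg]
      unfolding A_coef_def by simp
    then have "AE y in \<nu>. kern j y = 0"
      using AE_space by eventually_elim (use ratio_pos[OF assms] in fastforce)
    then have "(\<integral>y. kern j y \<partial>\<nu>) = (\<integral>y. 0 \<partial>\<nu>)"
      by (rule integral_cong_AE[rotated 2]) auto
    then show False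
      using kern_integral by simp
  qed
  moreover have "0 \<le> A_coef l j"
    unfolding A_coef_def using nonneg by (rule integral_nonneg_AE)
  ultimately show ?thesis
    by simp
qed

lemma A_coef_shift_pos: "l \<in> simplexJ \<Longrightarrow> 0 < A_coef l j + shift"
  using A_coef_pos shift_nonneg by (simp add: add_pos_nonneg)

lemma mix_integrable: "integrable \<nu> (mix l)"
  unfolding mix_def[abs_def]
  by (intro Bochner_Integration.integrable_sum integrable_mult_right kern_integrable)

lemma kern_falpha'_ratio:
  assumes "l \<in> simplexJ"
  shows "integrable \<nu> (\<lambda>y. kern j y * falpha' \<alpha> (ratio l y))"
    and "(\<integral>y. kern j y * falpha' \<alpha> (ratio l y) \<partial>\<nu>) = (A_coef l j - 1) / (\<alpha> - 1)"
proof -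
  have eq: "(\<lambda>y. kern j y * falpha' \<alpha> (ratio l y))
      = (\<lambda>y. (kern j y * ratio l y powr (\<alpha> - 1) - kern j y) / (\<alpha> - 1))"
    using alpha_less_one by (simp add: falpha'_def fun_eq_iff field_simps)
  show "integrable \<nu> (\<lambda>y. kern j y * falpha' \<alpha> (ratio l y))"
    unfolding eq by (intro integrable_divide Bochner_Integration.integrable_diff
        kern_ratio_powr_integrable[OF assms] kern_integrable)
  show "(\<integral>y. kern j y * falpha' \<alpha> (ratio l y) \<partial>\<nu>) = (A_coef l j - 1) / (\<alpha> - 1)"
    unfolding eq using kern_ratio_powr_integrable[OF assms] kern_integrable
    by (simp add: A_coef_def kern_integral)
qed

lemma bfun_integrable:
  "l \<in> simplexJ \<Longrightarrow> integrable \<nu> (\<lambda>y. k (\<Theta> j) y * falpha' \<alpha> (mixk k \<Theta> l y / p y))"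
  using kern_falpha'_ratio(1) by (simp add: mixk_eq_mix ratio_def kern_def)

lemma bfun_eq:
  "l \<in> simplexJ \<Longrightarrow> bfun \<nu> k p \<alpha> (mixk k \<Theta> l) (\<Theta> j) = (A_coef l j - 1) / (\<alpha> - 1)"
  using kern_falpha'_ratio(2) by (simp add: bfun_def mixk_eq_mix ratio_def kern_def)

lemma Gamma_base_eq:
  "l \<in> simplexJ \<Longrightarrow> (\<alpha> - 1) * (bfun \<nu> k p \<alpha> (mixk k \<Theta> l) (\<Theta> j) + \<kappa>) + 1 = A_coef l j + shift"
  using alpha_less_one by (simp add: bfun_eq shift_def field_simps)

definition rho :: "real \<Rightarrow> real" where
  "rho \<eta> = \<eta> / (1 - \<alpha>)"

definition norm_const :: "real \<Rightarrow> real ^ 'j \<Rightarrow> real" where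
  "norm_const \<eta> l = (\<Sum>m\<in>UNIV. l $ m * (A_coef l m + shift) powr rho \<eta>)"

definition factor :: "real \<Rightarrow> real ^ 'j \<Rightarrow> 'j \<Rightarrow> real" where
  "factor \<eta> l j = (A_coef l j + shift) powr rho \<eta> / norm_const \<eta> l"

abbreviation update :: "real \<Rightarrow> real ^ 'j \<Rightarrow> real ^ 'j" where
  "update \<eta> l \<equiv> Imixt \<nu> k p \<alpha> \<eta> \<kappa> \<Theta> l"

lemma rho_pos: "0 < \<eta> \<Longrightarrow> 0 < rho \<eta>"
  unfolding rho_def using alpha_less_one by simp

lemma Gamma_a_eq:
  "l \<in> simplexJ \<Longrightarrow>
    Gamma_a \<alpha> \<eta> (bfun \<nu> k p \<alpha> (mixk k \<Theta> l) (\<Theta> j) + \<kappa>) = (A_coef l j + shift) powr rho \<eta>"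
  unfolding Gamma_a_def rho_def by (simp add: Gamma_base_eq)

lemma norm_const_pos: "l \<in> simplexJ \<Longrightarrow> 0 < norm_const \<eta> l"
  unfolding norm_const_def
  by (rule weighted_sum_pos[where S = UNIV and w = "\<lambda>m. l $ m", simplified])
    (use A_coef_shift_pos in \<open>auto simp: simplexJ_nonneg simplexJ_sum less_imp_neq[symmetric]\<close>)

lemma factor_pos: "l \<in> simplexJ \<Longrightarrow> 0 < factor \<eta> l j"
  unfolding factor_def using A_coef_shift_pos norm_const_pos by (simp add: less_imp_neq[symmetric])

lemma update_nth: "l \<in> simplexJ \<Longrightarrow> update \<eta> l $ j = l $ j * factor \<eta> l j"
  by (simp add: Imixt_def Gamma_a_eq norm_const_def[symmetric] factor_def)

lemma update_simplexJ:
  assumes "l \<in> simplexJ"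
  shows "update \<eta> l \<in> simplexJ"
proof -
  have "(\<Sum>j\<in>UNIV. l $ j * factor \<eta> l j) = 1"
    using norm_const_pos[OF assms, of \<eta>]
    by (simp add: factor_def sum_divide_distrib[symmetric] norm_const_def mult.assoc)
  moreover have "0 \<le> l $ j * factor \<eta> l j" for j
    using simplexJ_nonneg[OF assms] factor_pos[OF assms] by (simp add: less_imp_le)
  ultimately show ?thesis
    unfolding simplexJ_def by (simp add: update_nth[OF assms])
qed

lemma update_pos: "l \<in> simplexJ \<Longrightarrow> 0 < l $ j \<Longrightarrow> 0 < update \<eta> l $ j"
  by (simp add: update_nth factor_pos)

definition psi_density :: "real ^ 'j \<Rightarrow> 'y \<Rightarrow> real" where
  "psi_density l y = falpha \<alpha> (ratio l y) * p y"

definition Psi_real :: "real ^ 'j \<Rightarrow> real" where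
  "Psi_real l = (\<integral>y. psi_density l y \<partial>\<nu>)"

lemma psi_density_measurable [measurable]: "psi_density l \<in> borel_measurable \<nu>"
  unfolding psi_density_def[abs_def] falpha_def by measurable

lemma psi_density_nonneg: "l \<in> simplexJ \<Longrightarrow> y \<in> space \<nu> \<Longrightarrow> 0 \<le> psi_density l y"
  unfolding psi_density_def using ratio_pos p_pos by (simp add: falpha_nonneg less_imp_le)

lemma mix_ratio_powr_integrable:
  assumes "l \<in> simplexJ"
  shows "integrable \<nu> (\<lambda>y. mix l y * ratio l y powr (\<alpha> - 1))"
proof -
  have "integrable \<nu> (\<lambda>y. \<Sum>j\<in>UNIV. l $ j * (kern j y * ratio l y powr (\<alpha> - 1)))"
    by (intro Bochner_Integration.integrable_sum integrable_mult_right
        kern_ratio_powr_integrable[OF assms])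
  then show ?thesis
    by (simp add: mix_def sum_distrib_right mult.assoc)
qed

lemma abs_ln_le_log_envelope: "\<bar>ln (kern j y / p y)\<bar> \<le> log_envelope y"
  unfolding log_envelope_def by (rule Max_ge) auto

lemma log_envelope_nonneg: "0 \<le> log_envelope y"
  using abs_ln_le_log_envelope[of undefined y] abs_ge_zero order_trans by blast

lemma abs_ln_ratio_le:
  assumes "l \<in> simplexJ" "y \<in> space \<nu>"
  shows "\<bar>ln (ratio l y)\<bar> \<le> log_envelope y + ln CARD('j)"
proof -
  have "(MAX j. kern j y) \<in> range (\<lambda>j. kern j y)"
    by (rule Max_in) auto
  then obtain j1 where j1: "(MAX j. kern j y) = kern j1 y"
    by (metis rangeE)
  have "ratio l y \<le> kern j1 y / p y"
    unfolding ratio_def using mix_le_Max[OF assms(1), of y] j1 p_pos[OF assms(2)]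
    by (simp add: divide_right_mono)
  then have "ln (ratio l y) \<le> ln (kern j1 y / p y)"
    using ratio_pos[OF assms] by simp
  then have upper: "ln (ratio l y) \<le> log_envelope y"
    using abs_ln_le_log_envelope[of j1 y] by simp
  obtain j0 where j0: "(kern j0 y / p y) / CARD('j) \<le> ratio l y"
    using ratio_lower_bound[OF assms] .
  have "ln (kern j0 y / p y) - ln CARD('j) = ln ((kern j0 y / p y) / CARD('j))"
    using kern_pos[OF assms(2), of j0] p_pos[OF assms(2)]
    by (intro ln_divide_pos[symmetric]) auto
  also have "\<dots> \<le> ln (ratio l y)"
    using j0 kern_pos[OF assms(2), of j0] p_pos[OF assms(2)] ratio_pos[OF assms]
    by (subst ln_le_cancel_iff) auto
  finally have lower: "- log_envelope y - ln CARD('j) \<le> ln (ratio l y)"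
    using abs_ln_le_log_envelope[of j0 y] by simp
  have "0 \<le> ln (real CARD('j))"
    by (simp add: Suc_leI)
  then show ?thesis
    unfolding abs_le_iff using upper lower by linarith
qed

lemma p_ln_ratio_integrable:
  assumes "\<alpha> = 0" "l \<in> simplexJ"
  shows "integrable \<nu> (\<lambda>y. p y * ln (ratio l y))"
proof (rule Bochner_Integration.integrable_bound)
  have "integrable \<nu> (\<lambda>y. log_envelope y * p y)"
  proof (rule integrableI_nonneg)
    show "AE y in \<nu>. 0 \<le> log_envelope y * p y"
      by (auto intro!: mult_nonneg_nonneg log_envelope_nonneg less_imp_le[OF p_pos])
    show "(\<integral>\<^sup>+ y. ennreal (log_envelope y * p y) \<partial>\<nu>) < \<infinity>"
      using log_envelope_nn_integral[OF assms(1)] by (simp add: log_envelope_def kern_def)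
  qed simp
  then show "integrable \<nu> (\<lambda>y. log_envelope y * p y + ln CARD('j) * p y)"
    by (intro Bochner_Integration.integrable_add integrable_mult_right p_integrable)
  show "AE y in \<nu>. norm (p y * ln (ratio l y)) \<le> norm (log_envelope y * p y + ln CARD('j) * p y)"
  proof (rule AE_I2)
    fix y assume y: "y \<in> space \<nu>"
    have "norm (p y * ln (ratio l y)) = p y * \<bar>ln (ratio l y)\<bar>"
      using p_pos[OF y] by (simp add: abs_mult)
    also have "\<dots> \<le> p y * (log_envelope y + ln CARD('j))"
      using abs_ln_ratio_le[OF assms(2) y] p_pos[OF y] by (intro mult_left_mono) auto
    also have "\<dots> \<le> norm (log_envelope y * p y + ln CARD('j) * p y)"
      by (simp add: algebra_simps)
    finally show "norm (p y * ln (ratio l y)) \<le> norm (log_envelope y * p y + ln CARD('j) * p y)" .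
  qed
qed simp

lemma psi_density_integrable:
  assumes "l \<in> simplexJ"
  shows "integrable \<nu> (psi_density l)"
proof (cases "\<alpha> = 0")
  case True
  have "integrable \<nu> (\<lambda>y. mix l y - p y - p y * ln (ratio l y))"
    by (intro Bochner_Integration.integrable_diff mix_integrable p_integrable
        p_ln_ratio_integrable[OF True assms])
  moreover have "AE y in \<nu>. mix l y - p y - p y * ln (ratio l y) = psi_density l y"
  proof (rule AE_I2)
    fix y assume y: "y \<in> space \<nu>"
    show "mix l y - p y - p y * ln (ratio l y) = psi_density l y"
      unfolding psi_density_def falpha_def mix_eq_ratio_mult[OF y] using True
      by (simp add: algebra_simps)
  qed
  ultimately show ?thesis
    by (rule integrable_cong_AE_imp[OF _ psi_density_measurable])
next
  case False
  have "integrable \<nu> (\<lambda>y. (mix l y * ratio l y powr (\<alpha> - 1) - p y - \<alpha> * (mix l y - p y))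
      / (\<alpha> * (\<alpha> - 1)))"
    by (intro integrable_divide Bochner_Integration.integrable_diff
        mix_ratio_powr_integrable[OF assms]
        p_integrable integrable_mult_right mix_integrable)
  moreover have "AE y in \<nu>. (mix l y * ratio l y powr (\<alpha> - 1) - p y - \<alpha> * (mix l y - p y))
      / (\<alpha> * (\<alpha> - 1))
      = psi_density l y"
  proof (rule AE_I2)
    fix y assume y: "y \<in> space \<nu>"
    have "mix l y * ratio l y powr (\<alpha> - 1) = ratio l y powr \<alpha> * p y"
      using ratio_pos[OF assms y] by (simp add: mix_eq_ratio_mult[OF y] powr_diff)
    then show "(mix l y * ratio l y powr (\<alpha> - 1) - p y - \<alpha> * (mix l y - p y)) / (\<alpha> * (\<alpha> - 1))
        = psi_density l y"
      using False alpha_less_one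
      by (simp add: psi_density_def falpha_def mix_eq_ratio_mult[OF y] field_simps)
  qed
  ultimately show ?thesis
    by (rule integrable_cong_AE_imp[OF _ psi_density_measurable])
qed

lemma Psi_eq_Psi_real: "l \<in> simplexJ \<Longrightarrow> Psi \<nu> p \<alpha> (mixk k \<Theta> l) = ennreal (Psi_real l)"
  unfolding Psi_def Psi_real_def mixk_eq_mix ratio_def[symmetric] psi_density_def[symmetric]
  by (rule nn_integral_eq_integral[OF psi_density_integrable]) (auto simp: psi_density_nonneg)

lemma Psi_real_nonneg: "l \<in> simplexJ \<Longrightarrow> 0 \<le> Psi_real l"
  unfolding Psi_real_def by (intro integral_nonneg_AE) (auto simp: psi_density_nonneg)

definition bregman :: "real ^ 'j \<Rightarrow> real ^ 'j \<Rightarrow> 'y \<Rightarrow> real" where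
  "bregman l l' y = p y * (ratio l y powr \<alpha> * falpha \<alpha> (ratio l' y / ratio l y))"

lemma bregman_measurable [measurable]: "bregman l l' \<in> borel_measurable \<nu>"
  unfolding bregman_def[abs_def] falpha_def by measurable

lemma bregman_nonneg: "l \<in> simplexJ \<Longrightarrow> l' \<in> simplexJ \<Longrightarrow> y \<in> space \<nu> \<Longrightarrow> 0 \<le> bregman l l' y"
  unfolding bregman_def using ratio_pos p_pos by (simp add: falpha_nonneg less_imp_le)

lemma bregman_eq:
  assumes l: "l \<in> simplexJ" and l': "l' \<in> simplexJ" and y: "y \<in> space \<nu>"
  shows "bregman l l' y = psi_density l' y - psi_density l y
      - (\<Sum>j\<in>UNIV. (l' $ j - l $ j) * (kern j y * falpha' \<alpha> (ratio l y)))"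
proof -
  have "(\<Sum>j\<in>UNIV. (l' $ j - l $ j) * (kern j y * falpha' \<alpha> (ratio l y)))
      = (mix l' y - mix l y) * falpha' \<alpha> (ratio l y)"
    unfolding mix_def by (simp add: sum_subtractf left_diff_distrib sum_distrib_right mult.assoc)
  also have "\<dots> = p y * (falpha' \<alpha> (ratio l y) * (ratio l' y - ratio l y))"
    by (simp add: mix_eq_ratio_mult[OF y] algebra_simps)
  finally have linear: "(\<Sum>j\<in>UNIV. (l' $ j - l $ j) * (kern j y * falpha' \<alpha> (ratio l y)))
      = p y * (falpha' \<alpha> (ratio l y) * (ratio l' y - ratio l y))" .
  have "bregman l l' y
      = p y * (falpha \<alpha> (ratio l' y) - falpha \<alpha> (ratio l y)
        - falpha' \<alpha> (ratio l y) * (ratio l' y - ratio l y))"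
    using falpha_bregman[OF ratio_pos[OF l y] ratio_pos[OF l' y], of \<alpha>] by (simp add: bregman_def)
  then show ?thesis
    unfolding linear psi_density_def by (simp add: algebra_simps)
qed

lemma bregman_integrable_and_integral:
  assumes l: "l \<in> simplexJ" and l': "l' \<in> simplexJ"
  shows "integrable \<nu> (bregman l l')"
    and "(\<integral>y. bregman l l' y \<partial>\<nu>)
      = Psi_real l' - Psi_real l - (\<Sum>j\<in>UNIV. (l' $ j - l $ j) * A_coef l j) / (\<alpha> - 1)"
proof -
  define G where "G y = psi_density l' y - psi_density l y
      - (\<Sum>j\<in>UNIV. (l' $ j - l $ j) * (kern j y * falpha' \<alpha> (ratio l y)))" for y
  have G: "integrable \<nu> G"
    unfolding G_def by (intro Bochner_Integration.integrable_diff psi_density_integrable l l'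
        Bochner_Integration.integrable_sum integrable_mult_right kern_falpha'_ratio(1)[OF l])
  have AE_eq: "AE y in \<nu>. G y = bregman l l' y"
    by (auto simp: G_def bregman_eq[OF l l'])
  show integrable: "integrable \<nu> (bregman l l')"
    by (rule integrable_cong_AE_imp[OF G bregman_measurable AE_eq])
  have "(\<integral>y. bregman l l' y \<partial>\<nu>) = (\<integral>y. G y \<partial>\<nu>)"
    by (rule integral_cong_AE[OF bregman_measurable borel_measurable_integrable[OF G]])
      (use AE_eq in auto)
  also have "\<dots> = Psi_real l' - Psi_real l
      - (\<Sum>j\<in>UNIV. (l' $ j - l $ j) * ((A_coef l j - 1) / (\<alpha> - 1)))"
    unfolding G_def Psi_real_def
    using psi_density_integrable[OF l] psi_density_integrable[OF l'] kern_falpha'_ratio[OF l]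
    by (simp add: integral_sum)
  also have "(\<Sum>j\<in>UNIV. (l' $ j - l $ j) * ((A_coef l j - 1) / (\<alpha> - 1)))
      = (\<Sum>j\<in>UNIV. (l' $ j - l $ j) * A_coef l j / (\<alpha> - 1) - (l' $ j - l $ j) / (\<alpha> - 1))"
    by (intro sum.cong refl) (simp add: diff_divide_distrib right_diff_distrib)
  also have "\<dots> = ((\<Sum>j\<in>UNIV. (l' $ j - l $ j) * A_coef l j) - (\<Sum>j\<in>UNIV. l' $ j - l $ j)) / (\<alpha> - 1)"
    by (simp only: sum_subtractf sum_divide_distrib diff_divide_distrib)
  also have "(\<Sum>j\<in>UNIV. l' $ j - l $ j) = 0"
    using simplexJ_sum[OF l] simplexJ_sum[OF l'] by (simp add: sum_subtractf)
  finally show "(\<integral>y. bregman l l' y \<partial>\<nu>)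
      = Psi_real l' - Psi_real l - (\<Sum>j\<in>UNIV. (l' $ j - l $ j) * A_coef l j) / (\<alpha> - 1)"
    by simp
qed

lemma bregman_integral_nonneg:
  "l \<in> simplexJ \<Longrightarrow> l' \<in> simplexJ \<Longrightarrow> 0 \<le> (\<integral>y. bregman l l' y \<partial>\<nu>)"
  by (intro integral_nonneg_AE) (auto simp: bregman_nonneg)

lemma Psi_real_linearization_le:
  assumes "l \<in> simplexJ" "l' \<in> simplexJ"
  shows "Psi_real l + (\<Sum>j\<in>UNIV. (l' $ j - l $ j) * A_coef l j) / (\<alpha> - 1) \<le> Psi_real l'"
  using bregman_integrable_and_integral(2)[OF assms] bregman_integral_nonneg[OF assms] by simp

lemma bregman_integral_eq_0_imp:
  assumes l: "l \<in> simplexJ" and l': "l' \<in> simplexJ" and zero: "(\<integral>y. bregman l l' y \<partial>\<nu>) = 0"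
  shows "AE y in \<nu>. mix l y = mix l' y"
proof -
  have "AE y in \<nu>. bregman l l' y = 0"
    using integral_nonneg_eq_0_iff_AE[OF bregman_integrable_and_integral(1)[OF l l']] zero
    by (auto simp: bregman_nonneg[OF l l'])
  then show ?thesis
  proof (rule AE_mp[OF _ AE_I2], intro impI)
    fix y assume y: "y \<in> space \<nu>" and "bregman l l' y = 0"
    then have "falpha \<alpha> (ratio l' y / ratio l y) = 0"
      using p_pos[OF y] ratio_pos[OF l y] by (simp add: bregman_def)
    then have "ratio l' y / ratio l y = 1"
      using falpha_pos ratio_pos[OF l y] ratio_pos[OF l' y] by (metis divide_pos_pos less_irrefl)
    then show "mix l y = mix l' y"
      using ratio_pos[OF l y] by (simp add: mix_eq_ratio_mult[OF y])
  qed
qed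

lemma bregman_update_le:
  assumes l: "l \<in> simplexJ" and y: "y \<in> space \<nu>"
  shows "bregman l (update \<eta> l) y
    \<le> (\<Sum>j\<in>UNIV. l $ j * falpha \<alpha> (factor \<eta> l j) * (kern j y * ratio l y powr (\<alpha> - 1)))"
proof -
  define w where "w j = l $ j * kern j y / mix l y" for j
  have m: "0 < mix l y"
    by (rule mix_pos[OF l y])
  have w_nonneg: "\<And>j. j \<in> UNIV \<Longrightarrow> 0 \<le> w j"
    unfolding w_def using simplexJ_nonneg[OF l] kern_pos[OF y] m by (simp add: less_imp_le)
  have w_sum: "(\<Sum>j\<in>UNIV. w j) = 1"
    unfolding w_def using m by (simp add: sum_divide_distrib[symmetric] mix_def)
  have mean: "(\<Sum>j\<in>UNIV. w j * factor \<eta> l j) = ratio (update \<eta> l) y / ratio l y"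
    unfolding w_def ratio_def using m p_pos[OF y]
    by (simp add: mix_def update_nth[OF l] sum_divide_distrib[symmetric] algebra_simps)
  have "falpha \<alpha> (ratio (update \<eta> l) y / ratio l y) \<le> (\<Sum>j\<in>UNIV. w j * falpha \<alpha> (factor \<eta> l j))"
    using jensen_falpha(1)[where w = w and y = "factor \<eta> l" and S = UNIV and r = \<alpha>]
      w_nonneg w_sum factor_pos[OF l] by (simp add: mean)
  then have "bregman l (update \<eta> l) y
      \<le> p y * ratio l y powr \<alpha> * (\<Sum>j\<in>UNIV. w j * falpha \<alpha> (factor \<eta> l j))"
    unfolding bregman_def using p_pos[OF y] by (simp add: mult.assoc mult_left_mono)
  also have "\<dots> = (\<Sum>j\<in>UNIV. l $ j * falpha \<alpha> (factor \<eta> l j) * (kern j y * ratio l y powr (\<alpha> - 1)))"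
  proof -
    have "p y * ratio l y powr \<alpha> = mix l y * ratio l y powr (\<alpha> - 1)"
      using ratio_pos[OF l y] by (simp add: mix_eq_ratio_mult[OF y] powr_diff)
    then show ?thesis
      unfolding w_def using m by (simp add: sum_distrib_left algebra_simps)
  qed
  finally show ?thesis .
qed

definition gap :: "real \<Rightarrow> real ^ 'j \<Rightarrow> real" where
  "gap \<eta> l = (\<Sum>j\<in>UNIV. l $ j * A_coef l j * halpha \<alpha> (factor \<eta> l j))"

lemma Psi_real_update_le:
  assumes l: "l \<in> simplexJ"
  shows "Psi_real (update \<eta> l) \<le> Psi_real l + gap \<eta> l"
proof -
  define l' where "l' = update \<eta> l"
  have l': "l' \<in> simplexJ"
    unfolding l'_def by (rule update_simplexJ[OF l])
  have "(\<integral>y. bregman l l' y \<partial>\<nu>)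
      \<le> (\<integral>y. (\<Sum>j\<in>UNIV. l $ j * falpha \<alpha> (factor \<eta> l j) * (kern j y * ratio l y powr (\<alpha> - 1))) \<partial>\<nu>)"
    unfolding l'_def
    by (intro integral_mono_AE bregman_integrable_and_integral(1)[OF l update_simplexJ[OF l]]
        Bochner_Integration.integrable_sum integrable_mult_right kern_ratio_powr_integrable[OF l])
      (auto simp: bregman_update_le[OF l])
  also have "\<dots> = (\<Sum>j\<in>UNIV. l $ j * falpha \<alpha> (factor \<eta> l j) * A_coef l j)"
    using kern_ratio_powr_integrable[OF l] by (simp add: integral_sum A_coef_def)
  finally have bregman_le: "(\<integral>y. bregman l l' y \<partial>\<nu>)
      \<le> (\<Sum>j\<in>UNIV. l $ j * falpha \<alpha> (factor \<eta> l j) * A_coef l j)" .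
  have linear: "(\<Sum>j\<in>UNIV. (l' $ j - l $ j) * A_coef l j) / (\<alpha> - 1)
      = (\<Sum>j\<in>UNIV. l $ j * A_coef l j * ((factor \<eta> l j - 1) / (\<alpha> - 1)))"
    unfolding l'_def update_nth[OF l] by (simp add: sum_divide_distrib algebra_simps)
  have "l $ j * A_coef l j * halpha \<alpha> (factor \<eta> l j)
      = l $ j * falpha \<alpha> (factor \<eta> l j) * A_coef l j
        + l $ j * A_coef l j * ((factor \<eta> l j - 1) / (\<alpha> - 1))" for j
  proof -
    have "halpha \<alpha> (factor \<eta> l j) = falpha \<alpha> (factor \<eta> l j) + (factor \<eta> l j - 1) / (\<alpha> - 1)"
      using falpha_plus_linear_eq_halpha[OF _ factor_pos[OF l]] alpha_less_one by simp
    then show ?thesis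
      by (simp add: algebra_simps)
  qed
  then have "gap \<eta> l = (\<Sum>j\<in>UNIV. l $ j * falpha \<alpha> (factor \<eta> l j) * A_coef l j)
      + (\<Sum>j\<in>UNIV. (l' $ j - l $ j) * A_coef l j) / (\<alpha> - 1)"
    unfolding linear gap_def by (simp add: sum.distrib)
  then show ?thesis
    using bregman_integrable_and_integral(2)[OF l l'] bregman_le unfolding l'_def by linarith
qed

lemma gap_nonpos:
  assumes l: "l \<in> simplexJ" and \<eta>: "0 < \<eta>" "\<eta> \<le> 1"
  shows "gap \<eta> l \<le> 0"
    and "gap \<eta> l = 0 \<Longrightarrow> 0 < l $ j \<Longrightarrow> factor \<eta> l j = 1"
proof -
  note ineq = sum_halpha_gap_nonpos[where S = UNIV and l = "\<lambda>j. l $ j" and A = "A_coef l"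
      and c = shift,
      OF _ _ simplexJ_sum[OF l] _ shift_nonneg alpha_less_one \<eta>,
      folded rho_def, folded norm_const_def, folded factor_def]
  show "gap \<eta> l \<le> 0"
    unfolding gap_def using ineq(1) A_coef_pos[OF l] simplexJ_nonneg[OF l] by simp
  assume "gap \<eta> l = 0" "0 < l $ j"
  then have "(A_coef l j + shift) powr rho \<eta> = norm_const \<eta> l"
    unfolding gap_def using ineq(2) A_coef_pos[OF l] simplexJ_nonneg[OF l] by force
  then show "factor \<eta> l j = 1"
    unfolding factor_def using norm_const_pos[OF l, of \<eta>] by simp
qed

lemma A_coef_tendsto:
  assumes x: "\<And>n. x n \<in> simplexJ" and lim: "x \<longlonglongrightarrow> l" and l: "l \<in> simplexJ"
  shows "(\<lambda>n. A_coef (x n) j) \<longlonglongrightarrow> A_coef l j"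
  unfolding A_coef_def
proof (rule integral_dominated_convergence[where w = "\<lambda>y. CARD('j) powr (1 - \<alpha>) * envelope y"])
  show "integrable \<nu> (\<lambda>y. CARD('j) powr (1 - \<alpha>) * envelope y)"
    by (intro integrable_mult_right envelope_integrable)
  show "AE y in \<nu>. (\<lambda>n. kern j y * ratio (x n) y powr (\<alpha> - 1)) \<longlonglongrightarrow> kern j y * ratio l y powr (\<alpha> - 1)"
  proof (rule AE_I2)
    fix y assume y: "y \<in> space \<nu>"
    have "(\<lambda>n. ratio (x n) y) \<longlonglongrightarrow> ratio l y"
      unfolding ratio_def mix_def using p_pos[OF y]
      by (intro tendsto_divide tendsto_sum tendsto_mult tendsto_const tendsto_vec_nth lim) auto
    then show "(\<lambda>n. kern j y * ratio (x n) y powr (\<alpha> - 1)) \<longlonglongrightarrow> kern j y * ratio l y powr (\<alpha> - 1)"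
      using ratio_pos[OF l y] by (intro tendsto_mult tendsto_const tendsto_powr) auto
  qed
  show "AE y in \<nu>. norm (kern j y * ratio (x n) y powr (\<alpha> - 1))
      \<le> CARD('j) powr (1 - \<alpha>) * envelope y" for n
    using kern_ratio_powr_bound[OF x] by auto
qed auto

lemma factor_tendsto:
  assumes x: "\<And>n. x n \<in> simplexJ" and lim: "x \<longlonglongrightarrow> l" and l: "l \<in> simplexJ"
  shows "(\<lambda>n. factor \<eta> (x n) j) \<longlonglongrightarrow> factor \<eta> l j"
proof -
  have A: "(\<lambda>n. A_coef (x n) j + shift) \<longlonglongrightarrow> A_coef l j + shift" for j
    by (intro tendsto_add A_coef_tendsto[OF x lim l] tendsto_const)
  have "(\<lambda>n. norm_const \<eta> (x n)) \<longlonglongrightarrow> norm_const \<eta> l"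
    unfolding norm_const_def using A_coef_shift_pos[OF l]
    by (intro tendsto_sum tendsto_mult tendsto_vec_nth lim tendsto_powr A tendsto_const)
      (metis less_irrefl)
  then show ?thesis
    unfolding factor_def using A_coef_shift_pos[OF l] norm_const_pos[OF l]
    by (intro tendsto_divide tendsto_powr A tendsto_const) (metis less_irrefl)+
qed

lemma update_tendsto:
  assumes x: "\<And>n. x n \<in> simplexJ" and lim: "x \<longlonglongrightarrow> l" and l: "l \<in> simplexJ"
  shows "(\<lambda>n. update \<eta> (x n)) \<longlonglongrightarrow> update \<eta> l"
proof (rule vec_tendstoI)
  show "(\<lambda>n. update \<eta> (x n) $ j) \<longlonglongrightarrow> update \<eta> l $ j" for j
    unfolding update_nth[OF x] update_nth[OF l]
    by (intro tendsto_mult tendsto_vec_nth lim factor_tendsto[OF x lim l])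
qed

lemma gap_tendsto:
  assumes x: "\<And>n. x n \<in> simplexJ" and lim: "x \<longlonglongrightarrow> l" and l: "l \<in> simplexJ"
  shows "(\<lambda>n. gap \<eta> (x n)) \<longlonglongrightarrow> gap \<eta> l"
  unfolding gap_def
  by (intro tendsto_sum tendsto_mult tendsto_vec_nth lim A_coef_tendsto[OF x lim l]
      halpha_tendsto factor_tendsto[OF x lim l] factor_pos[OF l])

lemma Kmeas_eq:
  assumes A: "A \<in> sets \<nu>"
  shows "Kmeas \<nu> k (\<Theta> j) A = (\<integral>y. kern j y * indicator A y \<partial>\<nu>)"
proof -
  have "emeasure (density \<nu> (\<lambda>y. ennreal (k (\<Theta> j) y))) A
      = (\<integral>\<^sup>+ y. ennreal (kern j y) * indicator A y \<partial>\<nu>)"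
    using kern_measurable[of j] by (subst emeasure_density) (auto simp: kern_def[abs_def] A)
  also have "\<dots> = (\<integral>\<^sup>+ y. ennreal (kern j y * indicator A y) \<partial>\<nu>)"
    by (intro nn_integral_cong) (auto simp: indicator_def)
  also have "\<dots> = ennreal (\<integral>y. kern j y * indicator A y \<partial>\<nu>)"
    by (rule nn_integral_eq_integral)
      (auto intro!: mult_nonneg_nonneg less_imp_le[OF kern_pos] integrable_real_mult_indicator A
        kern_integrable)
  finally show ?thesis
    unfolding Kmeas_def measure_def
    by (simp add: integral_nonneg_AE mult_nonneg_nonneg less_imp_le[OF kern_pos])
qed

lemma eq_if_mix_AE_eq:
  assumes li: "kernels_lin_indep \<nu> k \<Theta>" and AE: "AE y in \<nu>. mix l y = mix l' y"
  shows "l = l'"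
proof -
  have "(\<Sum>j\<in>UNIV. (l $ j - l' $ j) * Kmeas \<nu> k (\<Theta> j) A) = 0" if A: "A \<in> sets \<nu>" for A
  proof -
    have "(\<Sum>j\<in>UNIV. (l $ j - l' $ j) * Kmeas \<nu> k (\<Theta> j) A)
        = (\<integral>y. (\<Sum>j\<in>UNIV. (l $ j - l' $ j) * (kern j y * indicator A y)) \<partial>\<nu>)"
      using integrable_real_mult_indicator[OF A kern_integrable]
      by (simp add: Kmeas_eq[OF A] integral_sum)
    also have "\<dots> = (\<integral>y. 0 \<partial>\<nu>)"
      using A AE by (intro integral_cong_AE) (auto elim!: eventually_mono
          simp: mix_def left_diff_distrib sum_subtractf sum_distrib_right[symmetric]
            mult.assoc[symmetric])
    finally show ?thesis
      by simp
  qed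
  then have "\<forall>j. l $ j - l' $ j = 0"
    using li[unfolded kernels_lin_indep_def, rule_format, of "\<lambda>j. l $ j - l' $ j"] by blast
  then show ?thesis
    by (simp add: vec_eq_iff)
qed

definition fixed_point :: "real \<Rightarrow> real ^ 'j \<Rightarrow> bool" where
  "fixed_point \<eta> l \<longleftrightarrow> l \<in> simplexJ \<and> update \<eta> l = l"

lemma fixed_point_factor:
  assumes "fixed_point \<eta> l" "0 < l $ j"
  shows "factor \<eta> l j = 1"
  using assms update_nth[of l \<eta> j] by (simp add: fixed_point_def)

lemma fixed_point_A_coef:
  assumes f: "fixed_point \<eta> l" and \<eta>: "0 < \<eta>" and j: "0 < l $ j"
  shows "A_coef l j = norm_const \<eta> l powr (1 / rho \<eta>) - shift"
proof -
  have l: "l \<in> simplexJ"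
    using f by (simp add: fixed_point_def)
  have "(A_coef l j + shift) powr rho \<eta> = norm_const \<eta> l"
    using fixed_point_factor[OF f j] norm_const_pos[OF l, of \<eta>] by (simp add: factor_def)
  then have "((A_coef l j + shift) powr rho \<eta>) powr (1 / rho \<eta>) = norm_const \<eta> l powr (1 / rho \<eta>)"
    by simp
  then show ?thesis
    using A_coef_shift_pos[OF l, of j] rho_pos[OF \<eta>] by (simp add: powr_powr)
qed

lemma fixed_point_linear_term_zero:
  assumes f: "fixed_point \<eta> l" and \<eta>: "0 < \<eta>" and l': "l' \<in> simplexJ"
    and supp: "\<And>j. 0 < l' $ j \<Longrightarrow> 0 < l $ j"
  shows "(\<Sum>j\<in>UNIV. (l' $ j - l $ j) * A_coef l j) = 0"
proof -
  have l: "l \<in> simplexJ"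
    using f by (simp add: fixed_point_def)
  define \<beta> where "\<beta> = norm_const \<eta> l powr (1 / rho \<eta>) - shift"
  have eq: "(l' $ j - l $ j) * A_coef l j = (l' $ j - l $ j) * \<beta>" for j
  proof (cases "0 < l $ j")
    case True
    then show ?thesis
      using fixed_point_A_coef[OF f \<eta>] by (simp add: \<beta>_def)
  next
    case False
    have "l' $ j = 0"
      using supp[of j] False simplexJ_nonneg[OF l', of j] by force
    moreover have "l $ j = 0"
      using False simplexJ_nonneg[OF l, of j] by simp
    ultimately show ?thesis
      by simp
  qed
  have "(\<Sum>j\<in>UNIV. (l' $ j - l $ j) * A_coef l j) = (\<Sum>j\<in>UNIV. (l' $ j - l $ j) * \<beta>)"
    using eq by (rule sum.cong[OF refl])
  also have "\<dots> = 0"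
    using simplexJ_sum[OF l] simplexJ_sum[OF l']
    by (simp add: sum_distrib_right[symmetric] sum_subtractf)
  finally show ?thesis .
qed

lemma fixed_point_unique:
  assumes f: "fixed_point \<eta> l" and f': "fixed_point \<eta> l'" and \<eta>: "0 < \<eta>"
    and li: "kernels_lin_indep \<nu> k \<Theta>" and supp: "\<And>j. 0 < l $ j \<longleftrightarrow> 0 < l' $ j"
  shows "l = l'"
proof -
  have l: "l \<in> simplexJ" and l': "l' \<in> simplexJ"
    using f f' by (auto simp: fixed_point_def)
  have "(\<Sum>j\<in>UNIV. (l' $ j - l $ j) * A_coef l j) = 0"
    "(\<Sum>j\<in>UNIV. (l $ j - l' $ j) * A_coef l' j) = 0"
    using fixed_point_linear_term_zero[OF f \<eta> l'] fixed_point_linear_term_zero[OF f' \<eta> l] supp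
    by auto
  then have "(\<integral>y. bregman l l' y \<partial>\<nu>) = - (\<integral>y. bregman l' l y \<partial>\<nu>)"
    using bregman_integrable_and_integral(2)[OF l l'] bregman_integrable_and_integral(2)[OF l' l]
    by simp
  then have "(\<integral>y. bregman l l' y \<partial>\<nu>) = 0"
    using bregman_integral_nonneg[OF l l'] bregman_integral_nonneg[OF l' l] by linarith
  then show ?thesis
    by (rule eq_if_mix_AE_eq[OF li bregman_integral_eq_0_imp[OF l l']])
qed

lemma finite_fixed_points:
  assumes \<eta>: "0 < \<eta>" and li: "kernels_lin_indep \<nu> k \<Theta>"
  shows "finite {l. fixed_point \<eta> l}"
proof -
  define supp where "supp l = {j. 0 < l $ j}" for l :: "real ^ 'j"
  have "inj_on supp {l. fixed_point \<eta> l}"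
    by (rule inj_onI) (use fixed_point_unique[OF _ _ \<eta> li] in \<open>auto simp: supp_def set_eq_iff\<close>)
  moreover have "finite (supp ` {l. fixed_point \<eta> l})"
    by (rule finite_subset[of _ "Pow UNIV"]) auto
  ultimately show ?thesis
    by (rule finite_imageD[rotated])
qed

lemma iterates_simplexJ:
  assumes "lam 0 \<in> simplexJ" "\<And>n. lam (Suc n) = update \<eta> (lam n)"
  shows "lam n \<in> simplexJ"
proof (induction n)
  case (Suc n)
  then show ?case
    using update_simplexJ assms(2) by simp
qed (rule assms(1))

lemma A_coef_le_if_factor_le_one:
  assumes l: "l \<in> simplexJ" and \<eta>: "0 < \<eta>" and le: "factor \<eta> l j \<le> 1"
  shows "A_coef l j \<le> norm_const \<eta> l powr (1 / rho \<eta>) - shift"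
proof -
  have "(A_coef l j + shift) powr rho \<eta> \<le> norm_const \<eta> l"
    using le norm_const_pos[OF l, of \<eta>] by (simp add: factor_def)
  then have "((A_coef l j + shift) powr rho \<eta>) powr (1 / rho \<eta>) \<le> norm_const \<eta> l powr (1 / rho \<eta>)"
    using rho_pos[OF \<eta>] by (intro powr_mono2) auto
  then show ?thesis
    using A_coef_shift_pos[OF l, of j] rho_pos[OF \<eta>] by (simp add: powr_powr)
qed

text \<open>The hypothesis on the factors is the Karush-Kuhn-Tucker condition; convexity of \<open>Psi_real\<close>
  (\<open>Psi_real_linearization_le\<close>) turns it into global optimality.\<close>
lemma fixed_point_minimises:
  assumes f: "fixed_point \<eta> l" and \<eta>: "0 < \<eta>" and kkt: "\<And>j. factor \<eta> l j \<le> 1"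
    and l': "l' \<in> simplexJ"
  shows "Psi_real l \<le> Psi_real l'"
proof -
  have l: "l \<in> simplexJ"
    using f by (simp add: fixed_point_def)
  define \<beta> where "\<beta> = norm_const \<eta> l powr (1 / rho \<eta>) - shift"
  have "(\<Sum>j\<in>UNIV. l' $ j * A_coef l j) \<le> (\<Sum>j\<in>UNIV. l' $ j * \<beta>)"
    using A_coef_le_if_factor_le_one[OF l \<eta> kkt] simplexJ_nonneg[OF l']
    by (intro sum_mono mult_left_mono) (auto simp: \<beta>_def)
  moreover have "(\<Sum>j\<in>UNIV. l $ j * A_coef l j) = (\<Sum>j\<in>UNIV. l $ j * \<beta>)"
    using fixed_point_A_coef[OF f \<eta>] simplexJ_nonneg[OF l]
    by (intro sum.cong refl) (auto simp: \<beta>_def le_less)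
  ultimately have "(\<Sum>j\<in>UNIV. (l' $ j - l $ j) * A_coef l j) \<le> 0"
    using simplexJ_sum[OF l] simplexJ_sum[OF l']
    by (simp add: left_diff_distrib sum_subtractf sum_distrib_right[symmetric])
  then have "0 \<le> (\<Sum>j\<in>UNIV. (l' $ j - l $ j) * A_coef l j) / (\<alpha> - 1)"
    using alpha_less_one by (simp add: divide_nonpos_neg)
  then show ?thesis
    using Psi_real_linearization_le[OF l l'] by linarith
qed

lemma iterates_well_defined:
  assumes "lam 0 \<in> simplexJ" "\<And>n. lam (Suc n) = update \<eta> (lam n)"
  shows "lam n \<in> simplexJ
    \<and> (\<forall>j. integrable \<nu> (\<lambda>y. k (\<Theta> j) y * falpha' \<alpha> (mixk k \<Theta> (lam n) y / p y)))
    \<and> (\<forall>j. 0 < (\<alpha> - 1) * (bfun \<nu> k p \<alpha> (mixk k \<Theta> (lam n)) (\<Theta> j) + \<kappa>) + 1)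
    \<and> 0 < (\<Sum>m\<in>UNIV. lam n $ m * Gamma_a \<alpha> \<eta> (bfun \<nu> k p \<alpha> (mixk k \<Theta> (lam n)) (\<Theta> m) + \<kappa>))"
proof -
  have l: "lam n \<in> simplexJ"
    using assms by (rule iterates_simplexJ)
  then show ?thesis
    using bfun_integrable[OF l] A_coef_shift_pos[OF l] norm_const_pos[OF l, of \<eta>]
    by (simp add: Gamma_base_eq Gamma_a_eq norm_const_def)
qed

end

section \<open>Convergence of the iterates\<close>

locale power_descent_iteration = power_descent \<nu> k p \<Theta> \<alpha> \<kappa>
  for \<nu> :: "'y measure" and k :: "'a::topological_space \<Rightarrow> 'y \<Rightarrow> real" and p :: "'y \<Rightarrow> real"
    and \<Theta> :: "'j::finite \<Rightarrow> 'a" and \<alpha> \<kappa> :: real +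
  fixes \<eta> :: real and lam :: "nat \<Rightarrow> real ^ 'j"
  assumes eta_pos: "0 < \<eta>" and eta_le_one: "\<eta> \<le> 1"
    and lam_0: "lam 0 \<in> simplexJ_pos"
    and lam_Suc: "\<And>n. lam (Suc n) = update \<eta> (lam n)"
    and lin_indep: "kernels_lin_indep \<nu> k \<Theta>"
begin

lemma lam_simplexJ: "lam n \<in> simplexJ"
proof (rule iterates_simplexJ)
  show "lam 0 \<in> simplexJ"
    using lam_0 by (auto simp: simplexJ_def simplexJ_pos_def less_imp_le)
qed (rule lam_Suc)

lemma lam_pos: "0 < lam n $ j"
proof (induction n)
  case 0
  then show ?case
    using lam_0 by (simp add: simplexJ_pos_def)
next
  case (Suc n)
  then show ?case
    using update_pos[OF lam_simplexJ] by (simp add: lam_Suc)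
qed

lemma Psi_real_lam_step: "Psi_real (lam (Suc n)) \<le> Psi_real (lam n) + gap \<eta> (lam n)"
  using Psi_real_update_le[OF lam_simplexJ] by (simp add: lam_Suc)

lemma Psi_real_lam_decreasing: "Psi_real (lam (Suc n)) \<le> Psi_real (lam n)"
  using Psi_real_lam_step[of n] gap_nonpos(1)[OF lam_simplexJ[of n] eta_pos eta_le_one] by linarith

lemma gap_lam_tendsto_0: "(\<lambda>n. gap \<eta> (lam n)) \<longlonglongrightarrow> 0"
proof -
  have "decseq (\<lambda>n. Psi_real (lam n))"
    by (rule decseq_SucI) (rule Psi_real_lam_decreasing)
  then obtain L where L: "(\<lambda>n. Psi_real (lam n)) \<longlonglongrightarrow> L"
    using decseq_convergent[of _ 0] Psi_real_nonneg[OF lam_simplexJ] by blast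
  then have "(\<lambda>n. Psi_real (lam (Suc n)) - Psi_real (lam n)) \<longlonglongrightarrow> L - L"
    by (intro tendsto_diff LIMSEQ_Suc)
  then have "(\<lambda>n. Psi_real (lam (Suc n)) - Psi_real (lam n)) \<longlonglongrightarrow> 0"
    by simp
  then show ?thesis
  proof (rule tendsto_sandwich[where h = "\<lambda>n. 0", rotated 2])
    show "\<forall>\<^sub>F n in sequentially. Psi_real (lam (Suc n)) - Psi_real (lam n) \<le> gap \<eta> (lam n)"
      using Psi_real_lam_step by (auto intro!: always_eventually simp: algebra_simps)
    show "\<forall>\<^sub>F n in sequentially. gap \<eta> (lam n) \<le> 0"
      using gap_nonpos(1)[OF lam_simplexJ eta_pos eta_le_one] by (auto intro!: always_eventually)
  qed simp
qed

lemma limit_point_fixed: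
  assumes r: "strict_mono r" and lim: "(lam \<circ> r) \<longlonglongrightarrow> l"
  shows "fixed_point \<eta> l"
proof -
  have lr: "\<And>n. (lam \<circ> r) n \<in> simplexJ"
    using lam_simplexJ by simp
  have l: "l \<in> simplexJ"
    using closed_simplexJ lr lim by (rule closed_sequentially)
  have "(\<lambda>n. gap \<eta> ((lam \<circ> r) n)) \<longlonglongrightarrow> gap \<eta> l"
    by (rule gap_tendsto[OF lr lim l])
  moreover have "(\<lambda>n. gap \<eta> ((lam \<circ> r) n)) \<longlonglongrightarrow> 0"
    using LIMSEQ_subseq_LIMSEQ[OF gap_lam_tendsto_0 r] by (simp add: o_def)
  ultimately have "gap \<eta> l = 0"
    by (rule LIMSEQ_unique)
  have "update \<eta> l $ j = l $ j" for j
  proof (cases "l $ j = 0")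
    case False
    then have "factor \<eta> l j = 1"
      using gap_nonpos(2)[OF l eta_pos eta_le_one \<open>gap \<eta> l = 0\<close>] simplexJ_nonneg[OF l, of j] by simp
    then show ?thesis
      by (simp add: update_nth[OF l])
  qed (simp add: update_nth[OF l])
  then show ?thesis
    using l by (simp add: fixed_point_def vec_eq_iff)
qed

lemma lam_increments_tendsto_0: "(\<lambda>n. dist (lam (Suc n)) (lam n)) \<longlonglongrightarrow> 0"
proof (rule ccontr)
  assume "\<not> ?thesis"
  then obtain \<epsilon> where \<epsilon>: "0 < \<epsilon>" "\<not> eventually (\<lambda>n. dist (lam (Suc n)) (lam n) < \<epsilon>) sequentially"
    by (auto simp: tendsto_iff)
  have bounded: "bounded (range lam)"
    using lam_simplexJ by (intro bounded_subset[OF bounded_simplexJ]) auto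
  obtain l r where r: "strict_mono r" "\<And>n. \<not> dist (lam (Suc (r n))) (lam (r n)) < \<epsilon>"
    "(lam \<circ> r) \<longlonglongrightarrow> l"
    using \<epsilon>(2) by (rule bounded_not_eventually_convergent_subseq[OF bounded]) blast
  have f: "fixed_point \<eta> l"
    by (rule limit_point_fixed[OF r(1,3)])
  have "(\<lambda>n. update \<eta> ((lam \<circ> r) n)) \<longlonglongrightarrow> update \<eta> l"
    by (rule update_tendsto[OF _ r(3)]) (use lam_simplexJ f in \<open>auto simp: fixed_point_def\<close>)
  then have "(\<lambda>n. update \<eta> ((lam \<circ> r) n)) \<longlonglongrightarrow> l"
    using f by (simp add: fixed_point_def)
  then have "(\<lambda>n. dist (lam (Suc (r n))) (lam (r n))) \<longlonglongrightarrow> dist l l"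
    using r(3) by (intro tendsto_dist) (auto simp: lam_Suc o_def)
  then have "eventually (\<lambda>n. dist (lam (Suc (r n))) (lam (r n)) < \<epsilon>) sequentially"
    using \<epsilon>(1) by (auto dest: order_tendstoD)
  then obtain N where "\<And>n. N \<le> n \<Longrightarrow> dist (lam (Suc (r n))) (lam (r n)) < \<epsilon>"
    unfolding eventually_sequentially by blast
  then show False
    using r(2)[of N] by simp
qed

lemma lam_converges:
  obtains l where "fixed_point \<eta> l" "lam \<longlonglongrightarrow> l"
proof -
  have bounded: "bounded (range lam)"
    using lam_simplexJ by (intro bounded_subset[OF bounded_simplexJ]) auto
  have limit_points: "l \<in> {l. fixed_point \<eta> l}" if "strict_mono r" "(lam \<circ> r) \<longlonglongrightarrow> l" for l r
    using limit_point_fixed[OF that] by simp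
  have "convergent lam"
    using bounded finite_fixed_points[OF eta_pos lin_indep] limit_points lam_increments_tendsto_0
    by (rule convergent_if_finite_limit_points)
  then obtain l where "lam \<longlonglongrightarrow> l"
    by (auto simp: convergent_def)
  moreover have "fixed_point \<eta> l"
    using limit_point_fixed[of id l] calculation by (simp add: strict_mono_def)
  ultimately show ?thesis
    using that by blast
qed

text \<open>All coordinates of the iterates stay positive, so a coordinate whose factor exceeds \<open>1\<close> at the
  limit would eventually increase and could not converge to \<open>0\<close>.\<close>
lemma limit_factor_le_one:
  assumes lim: "lam \<longlonglongrightarrow> l" and f: "fixed_point \<eta> l"
  shows "factor \<eta> l j \<le> 1"
proof (rule ccontr)
  assume "\<not> ?thesis"
  then have gt: "1 < factor \<eta> l j"
    by simp
  have l: "l \<in> simplexJ"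
    using f by (simp add: fixed_point_def)
  have "l $ j = 0"
    using fixed_point_factor[OF f] gt simplexJ_nonneg[OF l, of j] by (cases "l $ j = 0") auto
  have "(\<lambda>n. factor \<eta> (lam n) j) \<longlonglongrightarrow> factor \<eta> l j"
    by (rule factor_tendsto[OF lam_simplexJ lim l])
  then have "eventually (\<lambda>n. 1 < factor \<eta> (lam n) j) sequentially"
    using gt by (rule order_tendstoD(1))
  then obtain N where N: "\<And>n. N \<le> n \<Longrightarrow> 1 < factor \<eta> (lam n) j"
    unfolding eventually_sequentially by blast
  have grow: "lam N $ j \<le> lam n $ j" if "N \<le> n" for n
    using that
  proof (induction n rule: dec_induct)
    case (step n)
    have "lam n $ j \<le> lam n $ j * factor \<eta> (lam n) j"
      using N[OF step(1)] lam_pos[of n j] by simp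
    then show ?case
      using step(3) by (simp add: lam_Suc update_nth[OF lam_simplexJ])
  qed simp
  have "lam N $ j \<le> l $ j"
    using tendsto_vec_nth[OF lim] by (rule LIMSEQ_le_const) (use grow in blast)
  then show False
    using \<open>l $ j = 0\<close> lam_pos[of N j] by simp
qed

lemma Psi_lam_decreasing: "Psi \<nu> p \<alpha> (mixk k \<Theta> (lam (Suc n))) \<le> Psi \<nu> p \<alpha> (mixk k \<Theta> (lam n))"
  using Psi_real_lam_decreasing by (simp add: Psi_eq_Psi_real[OF lam_simplexJ] ennreal_leI)

lemma lam_converges_to_minimiser:
  obtains l where "l \<in> simplexJ" "lam \<longlonglongrightarrow> l" "update \<eta> l = l"
    "Psi \<nu> p \<alpha> (mixk k \<Theta> l) = (INF l' \<in> simplexJ. Psi \<nu> p \<alpha> (mixk k \<Theta> l'))"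
proof -
  obtain l where f: "fixed_point \<eta> l" and lim: "lam \<longlonglongrightarrow> l"
    by (rule lam_converges)
  have l: "l \<in> simplexJ"
    using f by (simp add: fixed_point_def)
  have "Psi \<nu> p \<alpha> (mixk k \<Theta> l) \<le> Psi \<nu> p \<alpha> (mixk k \<Theta> l')" if "l' \<in> simplexJ" for l'
    using fixed_point_minimises[OF f eta_pos limit_factor_le_one[OF lim f] that]
    by (simp add: Psi_eq_Psi_real[OF l] Psi_eq_Psi_real[OF that] ennreal_leI)
  then have "Psi \<nu> p \<alpha> (mixk k \<Theta> l) = (INF l' \<in> simplexJ. Psi \<nu> p \<alpha> (mixk k \<Theta> l'))"
    using l by (intro antisym INF_greatest INF_lower) auto
  then show ?thesis
    using that l lim f by (simp add: fixed_point_def)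
qed

end

context power_descent
begin

lemma power_descent_convergence:
  assumes "0 < \<eta>" "\<eta> \<le> 1" "lam 0 \<in> simplexJ_pos" "\<forall>n. lam (Suc n) = update \<eta> (lam n)"
    and "kernels_lin_indep \<nu> k \<Theta>"
  shows "(\<forall>n. Psi \<nu> p \<alpha> (mixk k \<Theta> (lam (Suc n))) \<le> Psi \<nu> p \<alpha> (mixk k \<Theta> (lam n)))
    \<and> (\<exists>l \<in> simplexJ. lam \<longlonglongrightarrow> l \<and> update \<eta> l = l
          \<and> Psi \<nu> p \<alpha> (mixk k \<Theta> l) = (INF l' \<in> simplexJ. Psi \<nu> p \<alpha> (mixk k \<Theta> l')))"
proof -
  interpret power_descent_iteration \<nu> k p \<Theta> \<alpha> \<kappa> \<eta> lam
    using assms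
    by (intro power_descent_iteration.intro power_descent_axioms
        power_descent_iteration_axioms.intro) auto
  obtain l where "l \<in> simplexJ" "lam \<longlonglongrightarrow> l" "update \<eta> l = l"
    "Psi \<nu> p \<alpha> (mixk k \<Theta> l) = (INF l' \<in> simplexJ. Psi \<nu> p \<alpha> (mixk k \<Theta> l'))"
    by (rule lam_converges_to_minimiser)
  then show ?thesis
    using Psi_lam_decreasing by blast
qed

end

theorem theorem2:
  fixes \<nu> :: "'y measure" and k :: "'a::metric_space \<Rightarrow> 'y \<Rightarrow> real" and p :: "'y \<Rightarrow> real"
    and \<Theta> :: "'j::finite \<Rightarrow> 'a" and \<alpha> \<kappa> :: real
  assumes sf: "sigma_finite_measure \<nu>"
    and k_meas: "(\<lambda>(\<theta>, y). k \<theta> y) \<in> borel_measurable (borel \<Otimes>\<^sub>M \<nu>)"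
    and k_nonneg: "\<And>\<theta> y. y \<in> space \<nu> \<Longrightarrow> 0 \<le> k \<theta> y"
    and k_int1: "\<And>\<theta>. (\<integral>\<^sup>+ y. ennreal (k \<theta> y) \<partial>\<nu>) = 1"
    and p_meas: "p \<in> borel_measurable \<nu>"
    \<comment> \<open>(A1)\<close>
    and A1_k: "\<And>\<theta> y. y \<in> space \<nu> \<Longrightarrow> 0 < k \<theta> y"
    and A1_p: "\<And>y. y \<in> space \<nu> \<Longrightarrow> 0 < p y"
    and A1_pint: "(\<integral>\<^sup>+ y. ennreal (p y) \<partial>\<nu>) < \<infinity>"
    \<comment> \<open>(A3)\<close>
    and A3_cont: "\<And>y. y \<in> space \<nu> \<Longrightarrow> continuous_on UNIV (\<lambda>\<theta>. k \<theta> y)"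
    and A3_int: "(\<integral>\<^sup>+ y. ennreal ((MAX j. k (\<Theta> j) y) *
                    (MAX j'. (k (\<Theta> j') y / p y) powr (\<alpha> - 1))) \<partial>\<nu>) < \<infinity>"
    and A3_log: "\<alpha> = 0 \<Longrightarrow>
                 (\<integral>\<^sup>+ y. ennreal ((MAX j. \<bar>ln (k (\<Theta> j) y / p y)\<bar>) * p y) \<partial>\<nu>) < \<infinity>"
    and alpha_lt: "\<alpha> < 1"
    and kappa_le: "\<kappa> \<le> 0"
  shows
    "(\<forall>l \<in> simplexJ. Psi \<nu> p \<alpha> (mixk k \<Theta> l) < \<infinity>)
   \<and> (\<forall>\<eta> > 0. \<forall>lam :: nat \<Rightarrow> real ^ 'j.
        lam 0 \<in> simplexJ \<and> (\<forall>n. lam (Suc n) = Imixt \<nu> k p \<alpha> \<eta> \<kappa> \<Theta> (lam n)) \<longrightarrow>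
        (\<forall>n. lam n \<in> simplexJ
           \<and> (\<forall>j. integrable \<nu> (\<lambda>y. k (\<Theta> j) y * falpha' \<alpha> (mixk k \<Theta> (lam n) y / p y)))
           \<and> (\<forall>j. 0 < (\<alpha> - 1) * (bfun \<nu> k p \<alpha> (mixk k \<Theta> (lam n)) (\<Theta> j) + \<kappa>) + 1)
           \<and> 0 < (\<Sum>m\<in>UNIV. lam n $ m *
                    Gamma_a \<alpha> \<eta> (bfun \<nu> k p \<alpha> (mixk k \<Theta> (lam n)) (\<Theta> m) + \<kappa>))))
   \<and> (\<forall>\<eta>. 0 < \<eta> \<and> \<eta> \<le> 1 \<longrightarrow> (\<forall>lam :: nat \<Rightarrow> real ^ 'j.
        lam 0 \<in> simplexJ_pos \<and> (\<forall>n. lam (Suc n) = Imixt \<nu> k p \<alpha> \<eta> \<kappa> \<Theta> (lam n))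
        \<and> kernels_lin_indep \<nu> k \<Theta> \<longrightarrow>
          (\<forall>n. Psi \<nu> p \<alpha> (mixk k \<Theta> (lam (Suc n))) \<le> Psi \<nu> p \<alpha> (mixk k \<Theta> (lam n)))
        \<and> (\<exists>lstar \<in> simplexJ. lam \<longlonglongrightarrow> lstar
             \<and> Imixt \<nu> k p \<alpha> \<eta> \<kappa> \<Theta> lstar = lstar
             \<and> Psi \<nu> p \<alpha> (mixk k \<Theta> lstar) = (INF l' \<in> simplexJ. Psi \<nu> p \<alpha> (mixk k \<Theta> l')))))"
proof -
  interpret power_descent \<nu> k p \<Theta> \<alpha> \<kappa>
    by unfold_locales
      (use k_meas A1_k k_int1 p_meas A1_p A1_pint A3_int A3_log alpha_lt kappa_le in auto)
  show ?thesis (is "?finite \<and> ?well_defined \<and> ?convergence")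
  proof (intro conjI[of ?finite] conjI[of ?well_defined])
    show ?finite
      by (simp add: Psi_eq_Psi_real)
    show ?well_defined
      by (intro allI impI) (rule iterates_well_defined; auto)
    show ?convergence
      by (intro allI impI) (rule power_descent_convergence; auto)
  qed
qed

end
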